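(* Let $\mathcal{C}$ be a class of finite graphs each of which is a complete $d$-partite graph $K_{m_0,\dots,m_{d-1}}$ for some $d\in\mathbb{N}$ (with $d$ allowed to vary between graphs). For such a graph let $M:=\max_{i<d}m_i$ and $N:=\sum_{i<d}m_i$. The following are equivalent: (1) $\mathcal{C}$ is $\mathrm{MSO}_2$-orderable; (2) there is a constant $s\in\mathbb{N}$ such that $\mathcal{C}$ has property $\mathsf{SEP}(f)$ for $f(k)=2^{s(k+1)}$; (3) there is a constant $s\in\mathbb{N}$ such that every $K_{m_0,\dots,m_{d-1}}\in\mathcal{C}$ satisfies $M\le 2^{s(N-M+1)}$.
   Context: For $G=\langle V,E\rangle$, $\lceil G\rceil=\langle V\cup E,\mathrm{inc}\rangle$ (universe $V\cup E$, incidence relation). An MSO-formula $\varphi(x,y;Z_0,\dots,Z_{k-1})$ defines an order on a class $\mathcal{K}$ of structures if for every non-empty $\mathfrak{A}\in\mathcal{K}$ there are $P_0,\dots,P_{k-1}\subseteq A$ with $\{(a,b):\mathfrak{A}\models\varphi(a,b;\bar P)\}$ a linear order on $A$; a graph class is $\mathrm{MSO}_2$-orderable if some MSO-formula defines an order on $\{\lceil G\rceil\}$. $\mathrm{Sep}(G,k)$ is the maximum over vertex sets $S$, $|S|\le k$, of the number of connected components of $G-S$; $\mathcal{C}$ has $\mathsf{SEP}(f)$ if $\mathrm{Sep}(G,k)\le f(k)$ for all $G\in\mathcal{C}$ and all $k$. *)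

theory Defs
  imports Main
begin

type_synonym 'v graph = "'v set \<times> 'v set set"

definition finite_graph :: "'v graph \<Rightarrow> bool" where
  "finite_graph G \<longleftrightarrow> finite (fst G) \<and>
     (\<forall>e\<in>snd G. e \<subseteq> fst G \<and> card e = 2)"

text \<open>G is the complete d-partite graph with parts P 0, ..., P (d-1),
  i.e. G = K_{m_0,...,m_{d-1}} with m_i = card (P i).\<close>
definition complete_multipartite :: "'v graph \<Rightarrow> nat \<Rightarrow> (nat \<Rightarrow> 'v set) \<Rightarrow> bool" where
  "complete_multipartite G d P \<longleftrightarrow>
     (\<forall>i<d. \<forall>j<d. i \<noteq> j \<longrightarrow> P i \<inter> P j = {}) \<and>
     fst G = (\<Union>i<d. P i) \<and>
     snd G = {{u, v} | u v i j. i < d \<and> j < d \<and> i \<noteq> j \<and> u \<in> P i \<and> v \<in> P j}"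

definition part_max :: "nat \<Rightarrow> (nat \<Rightarrow> 'v set) \<Rightarrow> nat" where
  "part_max d P = Max (insert 0 ((\<lambda>i. card (P i)) ` {..<d}))"

definition part_sum :: "nat \<Rightarrow> (nat \<Rightarrow> 'v set) \<Rightarrow> nat" where
  "part_sum d P = (\<Sum>i<d. card (P i))"

definition reachable :: "'v graph \<Rightarrow> 'v \<Rightarrow> 'v \<Rightarrow> bool" where
  "reachable G = (\<lambda>u v. u \<in> fst G \<and> v \<in> fst G \<and> (\<exists>e\<in>snd G. e = {u, v}))\<^sup>*\<^sup>*"

definition components :: "'v graph \<Rightarrow> 'v set set" where
  "components G = {{w \<in> fst G. reachable G v w} | v. v \<in> fst G}"

definition delete_vertices :: "'v graph \<Rightarrow> 'v set \<Rightarrow> 'v graph" where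
  "delete_vertices G S = (fst G - S, {e \<in> snd G. e \<inter> S = {}})"

definition Sep :: "'v graph \<Rightarrow> nat \<Rightarrow> nat" where
  "Sep G k = Max {card (components (delete_vertices G S)) | S. S \<subseteq> fst G \<and> card S \<le> k}"

definition has_SEP :: "'v graph set \<Rightarrow> (nat \<Rightarrow> nat) \<Rightarrow> bool" where
  "has_SEP C f \<longleftrightarrow> (\<forall>G\<in>C. \<forall>k. Sep G k \<le> f k)"

datatype mso =
    Rel nat nat
  | Eq nat nat
  | Mem nat nat
  | Neg mso
  | Conj mso mso
  | Ex1 nat mso
  | ExS nat mso

fun fvars :: "mso \<Rightarrow> nat set" where
  "fvars (Rel i j) = {i, j}"
| "fvars (Eq i j) = {i, j}"
| "fvars (Mem i _) = {i}"
| "fvars (Neg \<phi>) = fvars \<phi>"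
| "fvars (Conj \<phi> \<psi>) = fvars \<phi> \<union> fvars \<psi>"
| "fvars (Ex1 i \<phi>) = fvars \<phi> - {i}"
| "fvars (ExS _ \<phi>) = fvars \<phi>"

fun svars :: "mso \<Rightarrow> nat set" where
  "svars (Rel _ _) = {}"
| "svars (Eq _ _) = {}"
| "svars (Mem _ j) = {j}"
| "svars (Neg \<phi>) = svars \<phi>"
| "svars (Conj \<phi> \<psi>) = svars \<phi> \<union> svars \<psi>"
| "svars (Ex1 _ \<phi>) = svars \<phi>"
| "svars (ExS j \<phi>) = svars \<phi> - {j}"

fun sat :: "'a set \<Rightarrow> ('a \<times> 'a) set \<Rightarrow> (nat \<Rightarrow> 'a) \<Rightarrow> (nat \<Rightarrow> 'a set) \<Rightarrow> mso \<Rightarrow> bool" where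
  "sat A R \<alpha> \<beta> (Rel i j) = ((\<alpha> i, \<alpha> j) \<in> R)"
| "sat A R \<alpha> \<beta> (Eq i j) = (\<alpha> i = \<alpha> j)"
| "sat A R \<alpha> \<beta> (Mem i j) = (\<alpha> i \<in> \<beta> j)"
| "sat A R \<alpha> \<beta> (Neg \<phi>) = (\<not> sat A R \<alpha> \<beta> \<phi>)"
| "sat A R \<alpha> \<beta> (Conj \<phi> \<psi>) = (sat A R \<alpha> \<beta> \<phi> \<and> sat A R \<alpha> \<beta> \<psi>)"
| "sat A R \<alpha> \<beta> (Ex1 i \<phi>) = (\<exists>a\<in>A. sat A R (\<alpha>(i := a)) \<beta> \<phi>)"
| "sat A R \<alpha> \<beta> (ExS j \<phi>) = (\<exists>X. X \<subseteq> A \<and> sat A R \<alpha> (\<beta>(j := X)) \<phi>)"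

text \<open>The formula \<phi>(x,y;Z_0,...,Z_{k-1}) has free element variables among
  x = 0, y = 1 and free set variables among 0, ..., k-1.  It defines an order
  on a class K of structures (A, R) if for every nonempty such structure there
  are parameters P_0, ..., P_{k-1} \<subseteq> A such that the defined binary relation
  is a linear order on A.\<close>
definition defines_order :: "mso \<Rightarrow> nat \<Rightarrow> ('a set \<times> ('a \<times> 'a) set) set \<Rightarrow> bool" where
  "defines_order \<phi> k K \<longleftrightarrow>
     fvars \<phi> \<subseteq> {0, 1} \<and> svars \<phi> \<subseteq> {..<k} \<and>
     (\<forall>(A, R)\<in>K. A \<noteq> {} \<longrightarrow>
        (\<exists>P :: nat \<Rightarrow> 'a set. (\<forall>i<k. P i \<subseteq> A) \<and>
           linear_order_on A
             {(a, b). a \<in> A \<and> b \<in> A \<and>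
                sat A R (\<lambda>i. if i = 0 then a else b) (\<lambda>i. if i < k then P i else {}) \<phi>}))"

definition inc_structure :: "'v graph \<Rightarrow> ('v + 'v set) set \<times> (('v + 'v set) \<times> ('v + 'v set)) set" where
  "inc_structure G = (Inl ` fst G \<union> Inr ` snd G,
                      {(Inl v, Inr e) | v e. v \<in> fst G \<and> e \<in> snd G \<and> v \<in> e})"

definition MSO2_orderable :: "'v graph set \<Rightarrow> bool" where
  "MSO2_orderable C \<longleftrightarrow> (\<exists>\<phi> k. defines_order \<phi> k (inc_structure ` C))"

end

theory Submission
  imports Defs "HOL-Library.FuncSet" "HOL-Library.List_Lexorder" "HOL-Library.Product_Lexorder"
    "HOL-Combinatorics.Transposition"
begin

(*
  (2) and (3) are equivalent because deleting the N - M vertices outside a largest part leaves M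
  isolated vertices, while deleting k vertices leaves either a connected graph or an independent
  set inside a single part, and the latter forces N - M \<le> k.

  (1) implies (3): if M > 2 ^ (s * (N - M + 1)) for a formula with s set parameters, then two
  vertices u, v of a largest part lie in the same parameters, and so do their edges to each vertex
  outside the part.  Exchanging u and v is an automorphism of the incidence structure fixing the
  parameters, which no definable linear order survives.

  (3) implies (1): up to N - M + 1 vertices of a largest part, together with all other parts,
  form a graph in which no part has more than half of the vertices; they lie on a path alternating
  between parts, which parameters can describe and MSO can order.  The remaining vertices of the
  largest part get distinct codes of s (N - M + 1) bits, written on the vertices themselves and on
  their edges to the other parts.  Vertices are ordered along the path and then by code, edges
  lexicographically by their ends.
*)

section \<open>Derived MSO connectives\<close>

definition Falsum :: mso where "Falsum = Neg (Eq 0 0)"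
definition Disj :: "mso \<Rightarrow> mso \<Rightarrow> mso" where "Disj \<phi> \<psi> = Neg (Conj (Neg \<phi>) (Neg \<psi>))"
definition Imp :: "mso \<Rightarrow> mso \<Rightarrow> mso" where "Imp \<phi> \<psi> = Neg (Conj \<phi> (Neg \<psi>))"
definition Iff :: "mso \<Rightarrow> mso \<Rightarrow> mso" where "Iff \<phi> \<psi> = Conj (Imp \<phi> \<psi>) (Imp \<psi> \<phi>)"
definition All1 :: "nat \<Rightarrow> mso \<Rightarrow> mso" where "All1 i \<phi> = Neg (Ex1 i (Neg \<phi>))"
definition AllS :: "nat \<Rightarrow> mso \<Rightarrow> mso" where "AllS i \<phi> = Neg (ExS i (Neg \<phi>))"

fun BigOr :: "nat \<Rightarrow> (nat \<Rightarrow> mso) \<Rightarrow> mso" where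
  "BigOr 0 f = Falsum"
| "BigOr (Suc n) f = Disj (BigOr n f) (f n)"

definition BigAnd :: "nat \<Rightarrow> (nat \<Rightarrow> mso) \<Rightarrow> mso" where
  "BigAnd n f = Neg (BigOr n (\<lambda>j. Neg (f j)))"

lemma sat_connectives [simp]:
  "sat A R \<alpha> \<beta> Falsum = False"
  "sat A R \<alpha> \<beta> (Disj \<phi> \<psi>) = (sat A R \<alpha> \<beta> \<phi> \<or> sat A R \<alpha> \<beta> \<psi>)"
  "sat A R \<alpha> \<beta> (Imp \<phi> \<psi>) = (sat A R \<alpha> \<beta> \<phi> \<longrightarrow> sat A R \<alpha> \<beta> \<psi>)"
  "sat A R \<alpha> \<beta> (Iff \<phi> \<psi>) = (sat A R \<alpha> \<beta> \<phi> \<longleftrightarrow> sat A R \<alpha> \<beta> \<psi>)"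
  "sat A R \<alpha> \<beta> (All1 i \<phi>) = (\<forall>a\<in>A. sat A R (\<alpha>(i := a)) \<beta> \<phi>)"
  "sat A R \<alpha> \<beta> (AllS i \<phi>) = (\<forall>X. X \<subseteq> A \<longrightarrow> sat A R \<alpha> (\<beta>(i := X)) \<phi>)"
  by (auto simp: Falsum_def Disj_def Imp_def Iff_def All1_def AllS_def)

lemma sat_BigOr [simp]: "sat A R \<alpha> \<beta> (BigOr n f) = (\<exists>j<n. sat A R \<alpha> \<beta> (f j))"
  by (induction n) (auto simp: less_Suc_eq)

lemma sat_BigAnd [simp]: "sat A R \<alpha> \<beta> (BigAnd n f) = (\<forall>j<n. sat A R \<alpha> \<beta> (f j))"
  by (auto simp: BigAnd_def)

lemma vars_connectives [simp]:
  "fvars Falsum = {0}" "svars Falsum = {}"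
  "fvars (Disj \<phi> \<psi>) = fvars \<phi> \<union> fvars \<psi>" "svars (Disj \<phi> \<psi>) = svars \<phi> \<union> svars \<psi>"
  "fvars (Imp \<phi> \<psi>) = fvars \<phi> \<union> fvars \<psi>" "svars (Imp \<phi> \<psi>) = svars \<phi> \<union> svars \<psi>"
  "fvars (Iff \<phi> \<psi>) = fvars \<phi> \<union> fvars \<psi>" "svars (Iff \<phi> \<psi>) = svars \<phi> \<union> svars \<psi>"
  "fvars (All1 i \<phi>) = fvars \<phi> - {i}" "svars (All1 i \<phi>) = svars \<phi>"
  "fvars (AllS i \<phi>) = fvars \<phi>" "svars (AllS i \<phi>) = svars \<phi> - {i}"
  by (auto simp: Falsum_def Disj_def Imp_def Iff_def All1_def AllS_def)

lemma vars_BigOr [simp]: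
  "fvars (BigOr n f) = insert 0 (\<Union>j<n. fvars (f j))"
  "svars (BigOr n f) = (\<Union>j<n. svars (f j))"
  by (induction n) (auto simp: lessThan_Suc)

lemma vars_BigAnd [simp]:
  "fvars (BigAnd n f) = insert 0 (\<Union>j<n. fvars (f j))"
  "svars (BigAnd n f) = (\<Union>j<n. svars (f j))"
  by (simp_all add: BigAnd_def)

section \<open>Definable linear orders are rigid\<close>

definition defined_relation :: "'a set \<Rightarrow> ('a \<times> 'a) set \<Rightarrow> mso \<Rightarrow> (nat \<Rightarrow> 'a set) \<Rightarrow> ('a \<times> 'a) set" where
  "defined_relation A R \<phi> \<beta> = {(a, b). a \<in> A \<and> b \<in> A \<and> sat A R (\<lambda>i. if i = 0 then a else b) \<beta> \<phi>}"

lemma defines_order_singleton: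
  "defines_order \<phi> k {S} \<longleftrightarrow> fvars \<phi> \<subseteq> {0, 1} \<and> svars \<phi> \<subseteq> {..<k} \<and>
     (fst S \<noteq> {} \<longrightarrow> (\<exists>Q. (\<forall>i<k. Q i \<subseteq> fst S) \<and>
        linear_order_on (fst S) (defined_relation (fst S) (snd S) \<phi> (\<lambda>i. if i < k then Q i else {}))))"
  by (cases S) (simp add: defines_order_def defined_relation_def)

lemma defines_order_pointwise:
  "defines_order \<phi> k K \<longleftrightarrow> fvars \<phi> \<subseteq> {0, 1} \<and> svars \<phi> \<subseteq> {..<k} \<and> (\<forall>S\<in>K. defines_order \<phi> k {S})"
  unfolding defines_order_def by auto

lemma sat_involutive_automorphism:
  assumes inv: "\<And>z. \<sigma> (\<sigma> z) = z" and closed: "\<And>z. z \<in> A \<Longrightarrow> \<sigma> z \<in> A"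
    and hom: "\<And>x y. (x, y) \<in> R \<Longrightarrow> (\<sigma> x, \<sigma> y) \<in> R"
  shows "sat A R (\<sigma> \<circ> \<alpha>) (\<lambda>i. \<sigma> ` \<beta> i) \<phi> \<longleftrightarrow> sat A R \<alpha> \<beta> \<phi>"
proof (induction \<phi> arbitrary: \<alpha> \<beta>)
  case (Rel i j)
  show ?case using hom[of "\<alpha> i" "\<alpha> j"] hom[of "\<sigma> (\<alpha> i)" "\<sigma> (\<alpha> j)"] inv by auto
next
  case (Eq i j)
  show ?case using inv by (metis comp_apply sat.simps(2))
next
  case (Mem i j)
  show ?case using inv by (simp add: image_iff) metis
next
  case (Ex1 i \<phi>)
  have upd: "(\<sigma> \<circ> \<alpha>)(i := \<sigma> a) = \<sigma> \<circ> \<alpha>(i := a)" for a by (auto simp: fun_eq_iff)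
  have shift: "(\<exists>b\<in>A. Q b) \<longleftrightarrow> (\<exists>a\<in>A. Q (\<sigma> a))" for Q
  proof
    assume "\<exists>b\<in>A. Q b"
    then obtain b where "b \<in> A" "Q b" by blast
    then show "\<exists>a\<in>A. Q (\<sigma> a)" using closed inv by (intro bexI[of _ "\<sigma> b"]) simp_all
  qed (use closed in blast)
  have "sat A R (\<sigma> \<circ> \<alpha>) (\<lambda>i. \<sigma> ` \<beta> i) (Ex1 i \<phi>)
      \<longleftrightarrow> (\<exists>a\<in>A. sat A R ((\<sigma> \<circ> \<alpha>)(i := \<sigma> a)) (\<lambda>i. \<sigma> ` \<beta> i) \<phi>)"
    using shift[of "\<lambda>b. sat A R ((\<sigma> \<circ> \<alpha>)(i := b)) (\<lambda>i. \<sigma> ` \<beta> i) \<phi>"] by simp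
  also have "\<dots> \<longleftrightarrow> sat A R \<alpha> \<beta> (Ex1 i \<phi>)" by (simp only: upd Ex1.IH sat.simps)
  finally show ?case .
next
  case (ExS j \<phi>)
  have upd: "(\<lambda>i. \<sigma> ` \<beta> i)(j := \<sigma> ` X) = (\<lambda>i. \<sigma> ` (\<beta>(j := X)) i)" for X by (auto simp: fun_eq_iff)
  have shift: "(\<exists>Y. Y \<subseteq> A \<and> Q Y) \<longleftrightarrow> (\<exists>X. X \<subseteq> A \<and> Q (\<sigma> ` X))" for Q
  proof
    assume "\<exists>Y. Y \<subseteq> A \<and> Q Y"
    then obtain Y where Y: "Y \<subseteq> A" "Q Y" by blast
    have "\<sigma> ` \<sigma> ` Y = Y" using inv by (simp add: image_image)
    then show "\<exists>X. X \<subseteq> A \<and> Q (\<sigma> ` X)" using Y closed by (intro exI[of _ "\<sigma> ` Y"]) auto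
  qed (use closed in blast)
  have "sat A R (\<sigma> \<circ> \<alpha>) (\<lambda>i. \<sigma> ` \<beta> i) (ExS j \<phi>)
      \<longleftrightarrow> (\<exists>X. X \<subseteq> A \<and> sat A R (\<sigma> \<circ> \<alpha>) ((\<lambda>i. \<sigma> ` \<beta> i)(j := \<sigma> ` X)) \<phi>)"
    using shift[of "\<lambda>Y. sat A R (\<sigma> \<circ> \<alpha>) ((\<lambda>i. \<sigma> ` \<beta> i)(j := Y)) \<phi>"] by simp
  also have "\<dots> \<longleftrightarrow> sat A R \<alpha> \<beta> (ExS j \<phi>)" by (simp only: upd ExS.IH sat.simps)
  finally show ?case .
qed simp_all

lemma definable_linear_order_rigid:
  assumes lin: "linear_order_on A (defined_relation A R \<phi> \<beta>)"
    and inv: "\<And>z. \<sigma> (\<sigma> z) = z" and closed: "\<And>z. z \<in> A \<Longrightarrow> \<sigma> z \<in> A"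
    and hom: "\<And>x y. (x, y) \<in> R \<Longrightarrow> (\<sigma> x, \<sigma> y) \<in> R"
    and fixed: "\<And>i. \<sigma> ` \<beta> i = \<beta> i"
    and x: "x \<in> A"
  shows "\<sigma> x = x"
proof (rule ccontr)
  assume moved: "\<sigma> x \<noteq> x"
  define le where "le = defined_relation A R \<phi> \<beta>"
  have swap: "\<sigma> \<circ> (\<lambda>i. if i = 0 then x else \<sigma> x) = (\<lambda>i. if i = 0 then \<sigma> x else x)"
    using inv by (auto simp: fun_eq_iff)
  have params: "(\<lambda>i. \<sigma> ` \<beta> i) = \<beta>" using fixed by simp
  have "sat A R (\<lambda>i. if i = 0 then \<sigma> x else x) \<beta> \<phi> \<longleftrightarrow> sat A R (\<lambda>i. if i = 0 then x else \<sigma> x) \<beta> \<phi>"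
    using sat_involutive_automorphism[OF inv closed hom, of "\<lambda>i. if i = 0 then x else \<sigma> x" \<beta> \<phi>]
    unfolding swap params .
  then have "(\<sigma> x, x) \<in> le \<longleftrightarrow> (x, \<sigma> x) \<in> le" using x closed by (simp add: le_def defined_relation_def)
  moreover have "(x, \<sigma> x) \<in> le \<or> (\<sigma> x, x) \<in> le"
    using lin moved x closed by (auto simp: le_def linear_order_on_def total_on_def)
  moreover have "antisym le" using lin by (simp add: le_def linear_order_on_def partial_order_on_def)
  ultimately show False using moved by (auto dest: antisymD)
qed

section \<open>Enumerations alternating between colour classes\<close>

lemma card_colour_class_remove:
  assumes "finite V" "x \<in> V"
  shows "card {v\<in>V - {x}. f v = p} + (if f x = p then 1 else 0) = card {v\<in>V. f v = p}"
proof (cases "f x = p")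
  case True
  then have "{v\<in>V - {x}. f v = p} = {v\<in>V. f v = p} - {x}" by auto
  then show ?thesis using card.remove[of "{v\<in>V. f v = p}" x] assms True by simp
next
  case False
  then have "{v\<in>V - {x}. f v = p} = {v\<in>V. f v = p}" by auto
  then show ?thesis using False by simp
qed

lemma card_two_colour_classes:
  assumes "finite V" "p \<noteq> p'"
  shows "card {v\<in>V. f v = p} + card {v\<in>V. f v = p'} \<le> card V"
proof -
  have "card {v\<in>V. f v = p} + card {v\<in>V. f v = p'} = card ({v\<in>V. f v = p} \<union> {v\<in>V. f v = p'})"
    using assms by (subst card_Un_disjoint) auto
  also have "\<dots> \<le> card V" using assms(1) by (intro card_mono) auto
  finally show ?thesis .
qed

text \<open>The first vertex is taken from a largest colour class other than the forbidden colour q.\<close>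

lemma alternating_enumeration_first:
  assumes fin: "finite V" and ne: "V \<noteq> {}"
    and balanced: "\<forall>p. 2 * card {v\<in>V. f v = p} \<le> card V + 1"
    and q: "2 * card {v\<in>V. f v = q} \<le> card V"
  obtains x where "x \<in> V" "f x \<noteq> q"
    "\<forall>p. 2 * card {v\<in>V - {x}. f v = p} \<le> card (V - {x}) + 1"
    "2 * card {v\<in>V - {x}. f v = f x} \<le> card (V - {x})"
proof -
  define cnt where "cnt p = card {v\<in>V. f v = p}" for p
  define F where "F = f ` V - {q}"
  have "F \<noteq> {}"
  proof
    assume "F = {}"
    then have "{v\<in>V. f v = q} = V" by (auto simp: F_def)
    then show False using q fin ne by simp
  qed
  moreover have "finite F" using fin by (simp add: F_def)
  ultimately have "Max (cnt ` F) \<in> cnt ` F" by (intro Max_in) auto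
  then obtain p where p: "p \<in> F" "cnt p = Max (cnt ` F)" by (auto simp: image_iff)
  obtain x where x: "x \<in> V" "f x = p" using p(1) by (auto simp: F_def)
  have other_le: "2 * cnt p' \<le> card V" if "p' \<noteq> p" for p'
  proof (cases "p' \<in> F")
    case True
    then have "cnt p' \<le> cnt p" using \<open>finite F\<close> by (simp add: p(2))
    then show ?thesis using card_two_colour_classes[OF fin \<open>p' \<noteq> p\<close>, of f] by (simp add: cnt_def)
  next
    case False
    then have "p' = q \<or> {v\<in>V. f v = p'} = {}" by (auto simp: F_def)
    then show ?thesis using q unfolding cnt_def by (auto simp only: card.empty)
  qed
  have card_rm: "card (V - {x}) + 1 = card V" using card.remove[OF fin x(1)] by simp
  show ?thesis
  proof (rule that[OF x(1)])
    show "f x \<noteq> q" using x p(1) by (simp add: F_def)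
    show "\<forall>p'. 2 * card {v\<in>V - {x}. f v = p'} \<le> card (V - {x}) + 1"
    proof
      fix p'
      show "2 * card {v\<in>V - {x}. f v = p'} \<le> card (V - {x}) + 1"
        using card_colour_class_remove[OF fin x(1), of f p'] other_le[of p'] balanced[rule_format, of p]
          card_rm x(2)
        by (cases "p' = p") (auto simp: cnt_def)
    qed
    show "2 * card {v\<in>V - {x}. f v = f x} \<le> card (V - {x})"
      using card_colour_class_remove[OF fin x(1), of f p] balanced[rule_format, of p] card_rm x(2)
      by auto
  qed
qed

lemma alternating_enumeration_avoiding:
  assumes "finite V"
    and "\<forall>p. 2 * card {v\<in>V. f v = p} \<le> card V + 1"
    and "2 * card {v\<in>V. f v = q} \<le> card V"
  shows "\<exists>xs. distinct xs \<and> set xs = V \<and> successively (\<lambda>a b. f a \<noteq> f b) xs \<and>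
           (xs \<noteq> [] \<longrightarrow> f (hd xs) \<noteq> q)"
  using assms
proof (induction "card V" arbitrary: V q)
  case 0
  then show ?case by (intro exI[of _ "[]"]) auto
next
  case (Suc n)
  then have "V \<noteq> {}" by auto
  obtain x where x: "x \<in> V" "f x \<noteq> q"
    and rest: "\<forall>p. 2 * card {v\<in>V - {x}. f v = p} \<le> card (V - {x}) + 1"
      "2 * card {v\<in>V - {x}. f v = f x} \<le> card (V - {x})"
    using Suc.prems(1) \<open>V \<noteq> {}\<close> Suc.prems(2,3) by (rule alternating_enumeration_first)
  have "n = card (V - {x})" using Suc.hyps(2) x(1) by simp
  moreover have "finite (V - {x})" using Suc.prems(1) by simp
  ultimately obtain xs where
    xs: "distinct xs" "set xs = V - {x}" "successively (\<lambda>a b. f a \<noteq> f b) xs"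
      "xs \<noteq> [] \<longrightarrow> f (hd xs) \<noteq> f x"
    using Suc.hyps(1) rest by blast
  have "distinct (x # xs)" "set (x # xs) = V" using xs(1,2) x(1) by auto
  moreover have "successively (\<lambda>a b. f a \<noteq> f b) (x # xs)" using xs(3,4) by (auto simp: successively_Cons)
  ultimately show ?case using x(2) by (intro exI[of _ "x # xs"]) simp
qed

lemma alternating_enumeration:
  fixes f :: "'a \<Rightarrow> nat"
  assumes "finite V" and "\<forall>p. 2 * card {v\<in>V. f v = p} \<le> card V + 1"
  obtains xs where "distinct xs" "set xs = V" "successively (\<lambda>a b. f a \<noteq> f b) xs"
proof -
  obtain q where "q \<notin> f ` V"
    using ex_new_if_finite[OF infinite_UNIV_nat finite_imageI[OF assms(1), of f]] by blast
  then have "{v\<in>V. f v = q} = {}" by auto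
  then have "card {v\<in>V. f v = q} = 0" by (simp only: card.empty)
  then show ?thesis
    using alternating_enumeration_avoiding[OF assms, of q] that by auto
qed


lemma list_less_iff_nth:
  fixes xs ys :: "'a::linorder list"
  assumes "length xs = length ys"
  shows "xs < ys \<longleftrightarrow> (\<exists>i<length xs. (\<forall>j<i. xs!j = ys!j) \<and> xs!i < ys!i)"
proof -
  have "take i xs = take i ys \<longleftrightarrow> (\<forall>j<i. xs!j = ys!j)" if "i < length xs" for i
    using that assms by (simp add: list_eq_iff_nth_eq)
  then show ?thesis
    using assms by (auto simp: list_less_def lexord_take_index_conv)
qed

lemma linear_order_on_key:
  fixes key :: "'a \<Rightarrow> 'b::linorder"
  assumes "inj_on key A"
  shows "linear_order_on A {(a, b). a \<in> A \<and> b \<in> A \<and> key a \<le> key b}"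
  using assms
  by (auto simp: linear_order_on_def partial_order_on_def preorder_on_def refl_on_def
      trans_def antisym_def total_on_def inj_on_def)

section \<open>Connected components and the separation number\<close>

lemma reachable_edgeless:
  assumes "snd H = {}" and "reachable H a b"
  shows "a = b"
  using assms(2) unfolding reachable_def by (induction rule: rtranclp_induct) (use assms(1) in auto)

lemma components_eq_image: "components H = (\<lambda>v. {w \<in> fst H. reachable H v w}) ` fst H"
  by (auto simp: components_def)

lemma card_components_edgeless: "snd H = {} \<Longrightarrow> card (components H) = card (fst H)"
proof -
  assume "snd H = {}"
  then have "{w \<in> fst H. reachable H v w} = {v}" if "v \<in> fst H" for v
    using that reachable_edgeless[OF \<open>snd H = {}\<close>] by (auto simp: reachable_def)
  then have "components H = (\<lambda>v. {v}) ` fst H"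
    unfolding components_eq_image by (rule image_cong[OF refl])
  then show ?thesis by (simp add: card_image)
qed

lemma components_connected:
  assumes "fst H \<noteq> {}" and "\<forall>v\<in>fst H. \<forall>w\<in>fst H. reachable H v w"
  shows "components H = {fst H}"
proof -
  have "components H = (\<lambda>v. fst H) ` fst H"
    unfolding components_eq_image by (rule image_cong[OF refl]) (use assms(2) in auto)
  then show ?thesis using assms(1) by auto
qed

lemma finite_separators: "finite (fst G) \<Longrightarrow> finite {S. S \<subseteq> fst G \<and> card S \<le> k}"
  by (rule rev_finite_subset[of "Pow (fst G)"]) auto

lemma card_components_le_Sep:
  "finite (fst G) \<Longrightarrow> S \<subseteq> fst G \<Longrightarrow> card S \<le> k \<Longrightarrow> card (components (delete_vertices G S)) \<le> Sep G k"
  unfolding Sep_def by (rule Max_ge) (auto intro: finite_image_set finite_separators)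

lemma Sep_le:
  assumes "finite (fst G)"
    and "\<And>S. S \<subseteq> fst G \<Longrightarrow> card S \<le> k \<Longrightarrow> card (components (delete_vertices G S)) \<le> b"
  shows "Sep G k \<le> b"
  unfolding Sep_def
  by (rule Max.boundedI) (use assms in \<open>auto intro: finite_image_set finite_separators\<close>)


locale complete_multipartite_graph =
  fixes G :: "'v graph" and d :: nat and P :: "nat \<Rightarrow> 'v set"
  assumes finite_graph: "finite_graph G" and complete_multipartite: "complete_multipartite G d P"
begin

abbreviation "V \<equiv> fst G"
abbreviation "E \<equiv> snd G"

lemma parts_disjoint: "i < d \<Longrightarrow> j < d \<Longrightarrow> i \<noteq> j \<Longrightarrow> P i \<inter> P j = {}"
  using complete_multipartite by (auto simp: complete_multipartite_def)

lemma vertices_eq: "V = (\<Union>i<d. P i)"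
  using complete_multipartite by (auto simp: complete_multipartite_def)

lemma edges_eq: "E = {{u, v} | u v i j. i < d \<and> j < d \<and> i \<noteq> j \<and> u \<in> P i \<and> v \<in> P j}"
  using complete_multipartite by (auto simp: complete_multipartite_def)

lemma finite_vertices: "finite V"
  using finite_graph by (simp add: finite_graph_def)

lemma part_subset: "i < d \<Longrightarrow> P i \<subseteq> V"
  using vertices_eq by auto

lemma finite_part: "i < d \<Longrightarrow> finite (P i)"
  using part_subset finite_vertices finite_subset by blast

definition part_of :: "'v \<Rightarrow> nat" where
  "part_of v = (THE i. i < d \<and> v \<in> P i)"

lemma part_of_eq: "i < d \<Longrightarrow> v \<in> P i \<Longrightarrow> part_of v = i"
  unfolding part_of_def by (rule the_equality) (use parts_disjoint in blast)+

lemma part_of_in: "v \<in> V \<Longrightarrow> part_of v < d \<and> v \<in> P (part_of v)"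
  using vertices_eq part_of_eq by auto

lemma edge_iff: "a \<in> V \<Longrightarrow> b \<in> V \<Longrightarrow> {a, b} \<in> E \<longleftrightarrow> part_of a \<noteq> part_of b"
proof
  assume "{a, b} \<in> E"
  then obtain u v i j where "{a, b} = {u, v}" "i < d" "j < d" "i \<noteq> j" "u \<in> P i" "v \<in> P j"
    using edges_eq by auto
  then show "part_of a \<noteq> part_of b" using part_of_eq by (auto simp: doubleton_eq_iff)
next
  assume "a \<in> V" "b \<in> V" "part_of a \<noteq> part_of b"
  then show "{a, b} \<in> E"
    unfolding edges_eq using part_of_in[of a] part_of_in[of b]
    by (intro CollectI exI[of _ a] exI[of _ b] exI[of _ "part_of a"] exI[of _ "part_of b"]) auto
qed

lemma edgeE:
  assumes "e \<in> E"
  obtains a b where "e = {a, b}" "a \<in> V" "b \<in> V" "part_of a \<noteq> part_of b"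
proof -
  from assms obtain u v i j where "e = {u, v}" "i < d" "j < d" "i \<noteq> j" "u \<in> P i" "v \<in> P j"
    using edges_eq by auto
  then show ?thesis using part_of_eq part_subset by (intro that[of u v]) auto
qed

lemma card_vertices: "card V = part_sum d P"
proof -
  have "card (\<Union>i<d. P i) = (\<Sum>i<d. card (P i))"
    by (rule card_UN_disjoint) (auto simp: finite_part parts_disjoint)
  then show ?thesis by (simp add: vertices_eq part_sum_def)
qed

lemma card_outside_part: "i < d \<Longrightarrow> card (V - P i) = part_sum d P - card (P i)"
  using card_Diff_subset[OF finite_part part_subset] card_vertices by simp

lemma card_part_le_part_max: "i < d \<Longrightarrow> card (P i) \<le> part_max d P"
  unfolding part_max_def by (intro Max_ge) auto

lemma part_max_attained:
  assumes "part_max d P > 0"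
  obtains i where "i < d" "card (P i) = part_max d P"
proof -
  have "part_max d P \<in> insert 0 ((\<lambda>i. card (P i)) ` {..<d})"
    unfolding part_max_def by (intro Max_in) auto
  then show ?thesis using assms that by auto
qed

lemma part_max_pos: "V \<noteq> {} \<Longrightarrow> part_max d P > 0"
proof -
  assume "V \<noteq> {}"
  then obtain v where "v \<in> V" by auto
  then have "card (P (part_of v)) > 0" using part_of_in finite_part card_gt_0_iff by blast
  then show ?thesis using card_part_le_part_max part_of_in \<open>v \<in> V\<close> by (meson less_le_trans)
qed

section \<open>The separation number of a complete multipartite graph\<close>

lemma reachable_after_deletion:
  assumes "x \<in> V - S" "y \<in> V - S" "part_of x \<noteq> part_of y"
  shows "reachable (delete_vertices G S) x y"
proof -
  have "{x, y} \<in> snd (delete_vertices G S)"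
    using assms edge_iff by (auto simp: delete_vertices_def)
  then show ?thesis
    using assms unfolding reachable_def by (intro r_into_rtranclp) (auto simp: delete_vertices_def)
qed

lemma edgeless_after_deletion:
  assumes "\<forall>a\<in>V - S. \<forall>b\<in>V - S. part_of a = part_of b"
  shows "snd (delete_vertices G S) = {}"
proof -
  have False if "e \<in> E" "e \<inter> S = {}" for e
    using \<open>e \<in> E\<close> by (rule edgeE) (use that assms in blast)
  then show ?thesis by (auto simp: delete_vertices_def)
qed

lemma card_components_after_deletion:
  assumes "S \<subseteq> V"
  shows "card (components (delete_vertices G S)) \<le> 1 \<or>
    (\<exists>i<d. V - S \<subseteq> P i \<and> card (components (delete_vertices G S)) = card (V - S))"
proof (cases "\<exists>a\<in>V - S. \<exists>b\<in>V - S. part_of a \<noteq> part_of b")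
  case True
  then obtain a b where ab: "a \<in> V - S" "b \<in> V - S" "part_of a \<noteq> part_of b" by blast
  have conn: "reachable (delete_vertices G S) v w" if "v \<in> V - S" "w \<in> V - S" for v w
  proof (cases "part_of v = part_of w")
    case True
    obtain z where z: "z \<in> V - S" "part_of z \<noteq> part_of v"
      using ab by (cases "part_of a = part_of v") auto
    show ?thesis
      using reachable_after_deletion[OF that(1) z(1)] reachable_after_deletion[OF z(1) that(2)] z(2) True
      unfolding reachable_def by (simp add: rtranclp_trans)
  qed (use that reachable_after_deletion in blast)
  have "fst (delete_vertices G S) = V - S" by (simp add: delete_vertices_def)
  then have "components (delete_vertices G S) = {V - S}"
    using components_connected[of "delete_vertices G S"] ab(1) conn by auto
  then show ?thesis by simp
next
  case False
  then have "snd (delete_vertices G S) = {}" by (intro edgeless_after_deletion) blast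
  then have card_eq: "card (components (delete_vertices G S)) = card (V - S)"
    using card_components_edgeless[of "delete_vertices G S"] by (simp add: delete_vertices_def)
  show ?thesis
  proof (cases "V - S = {}")
    case True
    with card_eq have "card (components (delete_vertices G S)) = 0" by (simp only: card.empty)
    then show ?thesis by simp
  next
    case nonempty: False
    then obtain w where w: "w \<in> V - S" by blast
    have "V - S \<subseteq> P (part_of w)"
    proof
      fix x assume x: "x \<in> V - S"
      then have "part_of x = part_of w" using False w by blast
      then show "x \<in> P (part_of w)" using part_of_in x by force
    qed
    then show ?thesis using card_eq part_of_in w by blast
  qed
qed

lemma part_max_le_Sep: "part_max d P \<le> Sep G (part_sum d P - part_max d P)"
proof (cases "part_max d P = 0")
  case False
  then obtain i where i: "i < d" "card (P i) = part_max d P" using part_max_attained by blast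
  define S where "S = V - P i"
  have "delete_vertices G S = (P i, {})"
    using edgeless_after_deletion[of S] part_subset[OF i(1)] part_of_eq[OF i(1)]
    by (auto simp: delete_vertices_def S_def)
  then have "card (components (delete_vertices G S)) = part_max d P"
    using card_components_edgeless[of "delete_vertices G S"] i(2) by simp
  moreover have "card S = part_sum d P - part_max d P"
    using card_outside_part i by (simp add: S_def)
  ultimately show ?thesis
    using card_components_le_Sep[OF finite_vertices, of S] by (simp add: S_def)
qed simp

lemma Sep_le_part_bound:
  assumes bound: "part_max d P \<le> 2 ^ (s * (part_sum d P - part_max d P + 1))"
  shows "Sep G k \<le> 2 ^ (s * (k + 1))"
proof (rule Sep_le[OF finite_vertices])
  fix S assume S: "S \<subseteq> V" "card S \<le> k"
  show "card (components (delete_vertices G S)) \<le> 2 ^ (s * (k + 1))"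
    using card_components_after_deletion[OF S(1)]
  proof
    assume "card (components (delete_vertices G S)) \<le> 1"
    then show ?thesis using one_le_power[of "2::nat"] by (meson one_le_numeral order_trans)
  next
    assume "\<exists>i<d. V - S \<subseteq> P i \<and> card (components (delete_vertices G S)) = card (V - S)"
    then obtain i where i: "i < d" "V - S \<subseteq> P i"
      and card_eq: "card (components (delete_vertices G S)) = card (V - S)" by blast
    have "card (V - P i) \<le> card S"
      using i(2) S(1) finite_vertices by (intro card_mono) (auto intro: finite_subset)
    then have "part_sum d P - part_max d P \<le> k"
      using card_outside_part[OF i(1)] card_part_le_part_max[OF i(1)] S(2) by linarith
    then have "(2::nat) ^ (s * (part_sum d P - part_max d P + 1)) \<le> 2 ^ (s * (k + 1))"
      by (intro power_increasing) simp_all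
    moreover have "card (V - S) \<le> part_max d P"
      using card_mono[OF finite_part[OF i(1)] i(2)] card_part_le_part_max[OF i(1)] by simp
    ultimately show ?thesis using card_eq bound by linarith
  qed
qed

end


section \<open>A large part prevents definable orders\<close>

text \<open>A profile assigns k bits to a vertex (\<open>None\<close>) and k bits to each of its edges to R.\<close>

definition profiles :: "'v set \<Rightarrow> nat \<Rightarrow> ('v option \<Rightarrow> bool list) set" where
  "profiles R k = (insert None (Some ` R)) \<rightarrow>\<^sub>E {bs. length bs = k}"

lemma finite_profiles: "finite R \<Longrightarrow> finite (profiles R k)"
  unfolding profiles_def using finite_lists_length_eq[of "UNIV :: bool set" k]
  by (intro finite_PiE) auto

lemma card_profiles: "finite R \<Longrightarrow> card (profiles R k) = 2 ^ (k * (card R + 1))"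
proof -
  assume "finite R"
  have "card {bs :: bool list. length bs = k} = 2 ^ k"
    using card_lists_length_eq[of "UNIV :: bool set" k] by simp
  moreover have "card (insert None (Some ` R)) = card R + 1"
    using \<open>finite R\<close> by (simp add: card_image)
  ultimately show ?thesis
    using \<open>finite R\<close> by (simp add: profiles_def card_PiE power_mult power_add)
qed

definition swap_incidence :: "'v \<Rightarrow> 'v \<Rightarrow> 'v + 'v set \<Rightarrow> 'v + 'v set" where
  "swap_incidence u v = map_sum (Transposition.transpose u v) (image (Transposition.transpose u v))"

lemma swap_incidence_involutive: "swap_incidence u v (swap_incidence u v z) = z"
  by (cases z) (simp_all add: swap_incidence_def image_image)

context complete_multipartite_graph
begin

abbreviation "universe \<equiv> fst (inc_structure G)"
abbreviation "incidence \<equiv> snd (inc_structure G)"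

lemma universe_eq: "universe = Inl ` V \<union> Inr ` E"
  by (simp add: inc_structure_def)

lemma incidence_iff:
  "(x, y) \<in> incidence \<longleftrightarrow> (\<exists>v e. x = Inl v \<and> y = Inr e \<and> v \<in> V \<and> e \<in> E \<and> v \<in> e)"
  by (auto simp: inc_structure_def)

lemma universe_nonempty: "universe \<noteq> {} \<Longrightarrow> V \<noteq> {}"
proof -
  assume "universe \<noteq> {}"
  then obtain z where "z \<in> Inl ` V \<union> Inr ` E" using universe_eq by auto
  then show "V \<noteq> {}" by (auto elim: edgeE)
qed

lemma transpose_edge:
  assumes "u \<in> V" "v \<in> V" "part_of u = part_of v" "e \<in> E"
  shows "Transposition.transpose u v ` e \<in> E"
proof -
  let ?t = "Transposition.transpose u v"
  have t: "?t x \<in> V" "part_of (?t x) = part_of x" if "x \<in> V" for x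
    using assms that by (auto simp: transpose_def)
  from \<open>e \<in> E\<close> show ?thesis
    by (rule edgeE) (use t edge_iff in auto)
qed

lemma swap_incidence_automorphism:
  assumes "u \<in> V" "v \<in> V" "part_of u = part_of v"
  shows "z \<in> universe \<Longrightarrow> swap_incidence u v z \<in> universe"
    and "(x, y) \<in> incidence \<Longrightarrow> (swap_incidence u v x, swap_incidence u v y) \<in> incidence"
  using assms transpose_edge[OF assms]
  by (auto simp: universe_eq incidence_iff swap_incidence_def transpose_def)

lemma swap_incidence_fixes:
  assumes uv: "u \<in> V" "v \<in> V" "u \<noteq> v" "part_of u = part_of v"
    and X: "X \<subseteq> universe"
    and self: "Inl u \<in> X \<longleftrightarrow> Inl v \<in> X"
    and edges: "\<And>w. w \<in> V \<Longrightarrow> part_of w \<noteq> part_of u \<Longrightarrow> Inr {u, w} \<in> X \<longleftrightarrow> Inr {v, w} \<in> X"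
  shows "swap_incidence u v ` X = X"
proof -
  let ?\<sigma> = "swap_incidence u v" and ?t = "Transposition.transpose u v"
  have maps_into: "?\<sigma> z \<in> X" if "z \<in> X" for z
  proof (cases z)
    case (Inl x)
    then show ?thesis using that self by (cases "x = u \<or> x = v") (auto simp: swap_incidence_def)
  next
    case (Inr e)
    then have "e \<in> E" using that X universe_eq by auto
    then obtain a b where ab: "e = {a, b}" "a \<in> V" "b \<in> V" "part_of a \<noteq> part_of b"
      by (rule edgeE)
    consider "u \<in> e" | "v \<in> e" | "u \<notin> e" "v \<notin> e" by blast
    then show ?thesis
    proof cases
      case 1
      then obtain w where w: "e = {u, w}" "w \<in> V" "part_of w \<noteq> part_of u" using ab by auto
      then have "?t ` e = {v, w}" using uv by (auto simp: transpose_def)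
      then show ?thesis using that Inr edges[OF w(2,3)] w(1) by (simp add: swap_incidence_def)
    next
      case 2
      then obtain w where w: "e = {v, w}" "w \<in> V" "part_of w \<noteq> part_of u" using ab uv(4) by auto
      then have "?t ` e = {u, w}" using uv by (auto simp: transpose_def)
      then show ?thesis using that Inr edges[OF w(2,3)] w(1) by (simp add: swap_incidence_def)
    next
      case 3
      then have "?t ` e = e" by (auto simp: transpose_def)
      then show ?thesis using that Inr by (simp add: swap_incidence_def)
    qed
  qed
  show ?thesis
  proof
    show "?\<sigma> ` X \<subseteq> X" using maps_into by blast
    show "X \<subseteq> ?\<sigma> ` X" using maps_into swap_incidence_involutive by (metis image_eqI subsetI)
  qed
qed

lemma twins_in_large_part:
  assumes i: "i < d" and large: "card (profiles (V - P i) k) < card (P i)"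
  obtains u v where "u \<in> P i" "v \<in> P i" "u \<noteq> v"
    "\<And>j. j < k \<Longrightarrow> Inl u \<in> Q j \<longleftrightarrow> Inl v \<in> Q j"
    "\<And>j w. j < k \<Longrightarrow> w \<in> V - P i \<Longrightarrow> Inr {u, w} \<in> Q j \<longleftrightarrow> Inr {v, w} \<in> Q j"
proof -
  define R where "R = V - P i"
  define profile where "profile u = restrict (\<lambda>x. case x of
      None \<Rightarrow> map (\<lambda>j. Inl u \<in> Q j) [0..<k]
    | Some w \<Rightarrow> map (\<lambda>j. Inr {u, w} \<in> Q j) [0..<k]) (insert None (Some ` R))" for u
  have "finite R" using finite_vertices by (simp add: R_def)
  have "profile u \<in> profiles R k" for u
    unfolding profile_def profiles_def by (subst restrict_PiE_iff) (auto split: option.split)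
  then have "\<not> inj_on profile (P i)"
    using card_inj_on_le[of profile "P i" "profiles R k"] finite_profiles[OF \<open>finite R\<close>] large
    by (auto simp: R_def)
  then obtain u v where uv: "u \<in> P i" "v \<in> P i" "u \<noteq> v" "profile u = profile v"
    unfolding inj_on_def by blast
  show ?thesis
  proof (rule that[OF uv(1-3)])
    show "Inl u \<in> Q j \<longleftrightarrow> Inl v \<in> Q j" if "j < k" for j
      using fun_cong[OF uv(4), of None] that by (simp add: profile_def)
    show "Inr {u, w} \<in> Q j \<longleftrightarrow> Inr {v, w} \<in> Q j" if "j < k" "w \<in> V - P i" for j w
      using fun_cong[OF uv(4), of "Some w"] that by (simp add: profile_def R_def)
  qed
qed

text \<open>Twins in a largest part are exchanged by an automorphism fixing all parameters, which no
  definable linear order survives.\<close>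

lemma part_max_bound_of_definable_order:
  assumes lin: "linear_order_on universe
      (defined_relation universe incidence \<phi> (\<lambda>i. if i < k then Q i else {}))"
    and Q: "\<forall>i<k. Q i \<subseteq> universe"
  shows "part_max d P \<le> 2 ^ (k * (part_sum d P - part_max d P + 1))"
proof (rule ccontr)
  assume big: "\<not> ?thesis"
  then obtain i where i: "i < d" "card (P i) = part_max d P"
    using part_max_attained by (metis gr0I le0)
  have "card (profiles (V - P i) k) < card (P i)"
    using big i card_profiles[of "V - P i"] card_outside_part[OF i(1)] finite_vertices by simp
  then obtain u v where uv: "u \<in> P i" "v \<in> P i" "u \<noteq> v"
    and self: "\<And>j. j < k \<Longrightarrow> Inl u \<in> Q j \<longleftrightarrow> Inl v \<in> Q j"
    and edges: "\<And>j w. j < k \<Longrightarrow> w \<in> V - P i \<Longrightarrow> Inr {u, w} \<in> Q j \<longleftrightarrow> Inr {v, w} \<in> Q j"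
    using twins_in_large_part[OF i(1)] by blast
  have parts: "u \<in> V" "v \<in> V" "part_of u = part_of v"
    using uv part_subset[OF i(1)] part_of_eq[OF i(1)] by auto
  have "swap_incidence u v ` Q j = Q j" if "j < k" for j
  proof (rule swap_incidence_fixes[OF parts(1,2) uv(3) parts(3)])
    show "Q j \<subseteq> universe" using Q that by simp
    show "Inl u \<in> Q j \<longleftrightarrow> Inl v \<in> Q j" using self[OF that] .
    fix w assume "w \<in> V" "part_of w \<noteq> part_of u"
    then have "w \<in> V - P i" using part_of_eq[OF i(1) uv(1)] part_of_eq[OF i(1)] by auto
    then show "Inr {u, w} \<in> Q j \<longleftrightarrow> Inr {v, w} \<in> Q j" using edges[OF that] by blast
  qed
  then have "swap_incidence u v ` (if j < k then Q j else {}) = (if j < k then Q j else {})" for j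
    by simp
  then have "swap_incidence u v (Inl u) = Inl u"
    using definable_linear_order_rigid[OF lin swap_incidence_involutive
        swap_incidence_automorphism[OF parts]] parts(1) universe_eq by blast
  then show False using uv(3) by (simp add: swap_incidence_def)
qed

end


section \<open>An MSO formula ordering incidence structures\<close>

definition lex_bits_less :: "nat \<Rightarrow> (nat \<Rightarrow> bool) \<Rightarrow> (nat \<Rightarrow> bool) \<Rightarrow> bool" where
  "lex_bits_less s p q \<longleftrightarrow> (\<exists>j<s. (\<forall>j'<j. p j' = q j') \<and> \<not> p j \<and> q j)"

lemma lex_bits_less_cong:
  "(\<And>j. j < s \<Longrightarrow> p j = p' j \<and> q j = q' j) \<Longrightarrow> lex_bits_less s p q = lex_bits_less s p' q'"
  unfolding lex_bits_less_def by (meson order.strict_trans)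

lemma lex_bits_less_iff_less:
  fixes a b :: "bool list"
  assumes "length a = s" "length b = s"
  shows "lex_bits_less s ((!) a) ((!) b) \<longleftrightarrow> a < b"
  using list_less_iff_nth[of a b] assms by (auto simp: lex_bits_less_def less_bool_def)

text \<open>Meaning of the set parameters of the formula below, for a graph whose largest part
  has been split into the part B0 and the coded part B1:
  0: the vertices;  1, 2, 3: the vertices of a Hamiltonian path through the rest V0 of the graph,
  by position modulo 3;  4: the edges of that path;  5: B1;  6: V0;  8 + j: bit j of the codes of
  the vertices in B1.  Index 7 is used for a quantified set.\<close>

definition path_succ :: "'a set \<Rightarrow> ('a \<times> 'a) set \<Rightarrow> (nat \<Rightarrow> 'a set) \<Rightarrow> 'a \<Rightarrow> 'a \<Rightarrow> bool" where
  "path_succ A R \<beta> u v \<longleftrightarrow> (\<exists>e\<in>A. (u, e) \<in> R \<and> (v, e) \<in> R \<and> e \<in> \<beta> 4 \<and>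
     ((u \<in> \<beta> 1 \<and> v \<in> \<beta> 2) \<or> (u \<in> \<beta> 2 \<and> v \<in> \<beta> 3) \<or> (u \<in> \<beta> 3 \<and> v \<in> \<beta> 1)))"

definition path_le :: "'a set \<Rightarrow> ('a \<times> 'a) set \<Rightarrow> (nat \<Rightarrow> 'a set) \<Rightarrow> 'a \<Rightarrow> 'a \<Rightarrow> bool" where
  "path_le A R \<beta> x y \<longleftrightarrow> (\<forall>X. X \<subseteq> A \<longrightarrow> x \<in> X \<longrightarrow>
     (\<forall>u\<in>A. \<forall>v\<in>A. u \<in> X \<longrightarrow> path_succ A R \<beta> u v \<longrightarrow> v \<in> X) \<longrightarrow> y \<in> X)"

definition edge_bit :: "'a set \<Rightarrow> ('a \<times> 'a) set \<Rightarrow> (nat \<Rightarrow> 'a set) \<Rightarrow> 'a \<Rightarrow> 'a \<Rightarrow> nat \<Rightarrow> bool" where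
  "edge_bit A R \<beta> u w j \<longleftrightarrow> (\<exists>e\<in>A. (u, e) \<in> R \<and> (w, e) \<in> R \<and> e \<in> \<beta> (8 + j))"

definition code_less :: "'a set \<Rightarrow> ('a \<times> 'a) set \<Rightarrow> (nat \<Rightarrow> 'a set) \<Rightarrow> nat \<Rightarrow> 'a \<Rightarrow> 'a \<Rightarrow> bool" where
  "code_less A R \<beta> s x y \<longleftrightarrow>
    lex_bits_less s (\<lambda>j. x \<in> \<beta> (8 + j)) (\<lambda>j. y \<in> \<beta> (8 + j)) \<or>
    ((\<forall>j<s. x \<in> \<beta> (8 + j) \<longleftrightarrow> y \<in> \<beta> (8 + j)) \<and>
     (\<exists>w\<in>A. w \<in> \<beta> 6 \<and>
        (\<forall>w'\<in>A. w' \<in> \<beta> 6 \<and> path_le A R \<beta> w' w \<and> w' \<noteq> w \<longrightarrow>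
            (\<forall>j<s. edge_bit A R \<beta> x w' j \<longleftrightarrow> edge_bit A R \<beta> y w' j)) \<and>
        lex_bits_less s (edge_bit A R \<beta> x w) (edge_bit A R \<beta> y w)))"

definition vertex_le :: "'a set \<Rightarrow> ('a \<times> 'a) set \<Rightarrow> (nat \<Rightarrow> 'a set) \<Rightarrow> nat \<Rightarrow> 'a \<Rightarrow> 'a \<Rightarrow> bool" where
  "vertex_le A R \<beta> s x y \<longleftrightarrow>
    (x \<notin> \<beta> 5 \<and> y \<notin> \<beta> 5 \<and> path_le A R \<beta> x y) \<or> (x \<notin> \<beta> 5 \<and> y \<in> \<beta> 5) \<or>
    (x \<in> \<beta> 5 \<and> y \<in> \<beta> 5 \<and> (x = y \<or> code_less A R \<beta> s x y))"

definition edge_le :: "'a set \<Rightarrow> ('a \<times> 'a) set \<Rightarrow> (nat \<Rightarrow> 'a set) \<Rightarrow> nat \<Rightarrow> 'a \<Rightarrow> 'a \<Rightarrow> bool" where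
  "edge_le A R \<beta> s x y \<longleftrightarrow>
    (\<exists>a\<in>A. \<exists>b\<in>A. \<exists>c\<in>A. \<exists>d\<in>A.
       (a, x) \<in> R \<and> (b, x) \<in> R \<and> vertex_le A R \<beta> s a b \<and> a \<noteq> b \<and>
       (c, y) \<in> R \<and> (d, y) \<in> R \<and> vertex_le A R \<beta> s c d \<and> c \<noteq> d \<and>
       ((vertex_le A R \<beta> s a c \<and> a \<noteq> c) \<or> (a = c \<and> vertex_le A R \<beta> s b d)))"

definition element_le :: "'a set \<Rightarrow> ('a \<times> 'a) set \<Rightarrow> (nat \<Rightarrow> 'a set) \<Rightarrow> nat \<Rightarrow> 'a \<Rightarrow> 'a \<Rightarrow> bool" where
  "element_le A R \<beta> s x y \<longleftrightarrow>
    (x \<in> \<beta> 0 \<and> y \<in> \<beta> 0 \<and> vertex_le A R \<beta> s x y) \<or> (x \<in> \<beta> 0 \<and> y \<notin> \<beta> 0) \<or>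
    (x \<notin> \<beta> 0 \<and> y \<notin> \<beta> 0 \<and> edge_le A R \<beta> s x y)"

text \<open>In the formulas, the element variables from \<open>n\<close> on are free for quantification.\<close>

definition path_succ_fm :: "nat \<Rightarrow> nat \<Rightarrow> nat \<Rightarrow> mso" where
  "path_succ_fm n x y = Ex1 n (Conj (Rel x n) (Conj (Rel y n) (Conj (Mem n 4)
     (Disj (Conj (Mem x 1) (Mem y 2)) (Disj (Conj (Mem x 2) (Mem y 3)) (Conj (Mem x 3) (Mem y 1)))))))"

definition path_le_fm :: "nat \<Rightarrow> nat \<Rightarrow> nat \<Rightarrow> mso" where
  "path_le_fm n x y = AllS 7 (Imp (Conj (Mem x 7) (All1 n (All1 (Suc n)
      (Imp (Conj (Mem n 7) (path_succ_fm (n + 2) n (Suc n))) (Mem (Suc n) 7))))) (Mem y 7))"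

definition edge_bit_fm :: "nat \<Rightarrow> nat \<Rightarrow> nat \<Rightarrow> nat \<Rightarrow> mso" where
  "edge_bit_fm n x w j = Ex1 n (Conj (Rel x n) (Conj (Rel w n) (Mem n (8 + j))))"

definition lex_less_fm :: "nat \<Rightarrow> (nat \<Rightarrow> nat \<Rightarrow> mso) \<Rightarrow> nat \<Rightarrow> nat \<Rightarrow> mso" where
  "lex_less_fm s b x y =
     BigOr s (\<lambda>j. Conj (BigAnd j (\<lambda>j'. Iff (b j' x) (b j' y))) (Conj (Neg (b j x)) (b j y)))"

definition lex_eq_fm :: "nat \<Rightarrow> (nat \<Rightarrow> nat \<Rightarrow> mso) \<Rightarrow> nat \<Rightarrow> nat \<Rightarrow> mso" where
  "lex_eq_fm s b x y = BigAnd s (\<lambda>j. Iff (b j x) (b j y))"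

definition code_less_fm :: "nat \<Rightarrow> nat \<Rightarrow> nat \<Rightarrow> nat \<Rightarrow> mso" where
  "code_less_fm s n x y = Disj (lex_less_fm s (\<lambda>j z. Mem z (8 + j)) x y)
     (Conj (lex_eq_fm s (\<lambda>j z. Mem z (8 + j)) x y)
       (Ex1 n (Conj (Mem n 6) (Conj
          (All1 (Suc n) (Imp (Conj (Mem (Suc n) 6) (Conj (path_le_fm (n + 2) (Suc n) n) (Neg (Eq (Suc n) n))))
               (lex_eq_fm s (\<lambda>j z. edge_bit_fm (n + 2) z (Suc n) j) x y)))
          (lex_less_fm s (\<lambda>j z. edge_bit_fm (n + 2) z n j) x y)))))"

definition vertex_le_fm :: "nat \<Rightarrow> nat \<Rightarrow> nat \<Rightarrow> nat \<Rightarrow> mso" where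
  "vertex_le_fm s n x y = Disj (Conj (Neg (Mem x 5)) (Conj (Neg (Mem y 5)) (path_le_fm n x y)))
     (Disj (Conj (Neg (Mem x 5)) (Mem y 5))
       (Conj (Mem x 5) (Conj (Mem y 5) (Disj (Eq x y) (code_less_fm s n x y)))))"

definition edge_le_fm :: "nat \<Rightarrow> nat \<Rightarrow> nat \<Rightarrow> nat \<Rightarrow> mso" where
  "edge_le_fm s n x y = Ex1 n (Ex1 (n + 1) (Ex1 (n + 2) (Ex1 (n + 3)
     (Conj (Rel n x) (Conj (Rel (n + 1) x) (Conj (vertex_le_fm s (n + 4) n (n + 1)) (Conj (Neg (Eq n (n + 1)))
     (Conj (Rel (n + 2) y) (Conj (Rel (n + 3) y) (Conj (vertex_le_fm s (n + 4) (n + 2) (n + 3))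
     (Conj (Neg (Eq (n + 2) (n + 3)))
       (Disj (Conj (vertex_le_fm s (n + 4) n (n + 2)) (Neg (Eq n (n + 2))))
             (Conj (Eq n (n + 2)) (vertex_le_fm s (n + 4) (n + 1) (n + 3)))))))))))))))"

definition order_fm :: "nat \<Rightarrow> mso" where
  "order_fm s = Disj (Conj (Mem 0 0) (Conj (Mem 1 0) (vertex_le_fm s 2 0 1)))
     (Disj (Conj (Mem 0 0) (Neg (Mem 1 0)))
       (Conj (Neg (Mem 0 0)) (Conj (Neg (Mem 1 0)) (edge_le_fm s 2 0 1))))"

lemma sat_path_succ_fm [simp]: "x < n \<Longrightarrow> y < n \<Longrightarrow>
  sat A R \<alpha> \<beta> (path_succ_fm n x y) = path_succ A R \<beta> (\<alpha> x) (\<alpha> y)"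
  by (auto simp: path_succ_fm_def path_succ_def)

lemma path_succ_update_7 [simp]: "path_succ A R (\<beta>(7 := X)) = path_succ A R \<beta>"
  by (simp add: path_succ_def fun_eq_iff)

lemma sat_path_le_fm [simp]: "x < n \<Longrightarrow> y < n \<Longrightarrow>
  sat A R \<alpha> \<beta> (path_le_fm n x y) = path_le A R \<beta> (\<alpha> x) (\<alpha> y)"
  by (simp add: path_le_fm_def path_le_def) blast

lemma sat_edge_bit_fm [simp]: "x < n \<Longrightarrow> w < n \<Longrightarrow>
  sat A R \<alpha> \<beta> (edge_bit_fm n x w j) = edge_bit A R \<beta> (\<alpha> x) (\<alpha> w) j"
  by (auto simp: edge_bit_fm_def edge_bit_def)

lemma sat_lex_less_fm [simp]: "sat A R \<alpha> \<beta> (lex_less_fm s b x y) =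
  lex_bits_less s (\<lambda>j. sat A R \<alpha> \<beta> (b j x)) (\<lambda>j. sat A R \<alpha> \<beta> (b j y))"
  by (simp add: lex_less_fm_def lex_bits_less_def)

lemma sat_lex_eq_fm [simp]: "sat A R \<alpha> \<beta> (lex_eq_fm s b x y) =
  (\<forall>j<s. sat A R \<alpha> \<beta> (b j x) \<longleftrightarrow> sat A R \<alpha> \<beta> (b j y))"
  by (simp add: lex_eq_fm_def)

lemma sat_code_less_fm [simp]: "x < n \<Longrightarrow> y < n \<Longrightarrow>
  sat A R \<alpha> \<beta> (code_less_fm s n x y) = code_less A R \<beta> s (\<alpha> x) (\<alpha> y)"
  by (simp add: code_less_fm_def code_less_def)

lemma sat_vertex_le_fm [simp]: "x < n \<Longrightarrow> y < n \<Longrightarrow>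
  sat A R \<alpha> \<beta> (vertex_le_fm s n x y) = vertex_le A R \<beta> s (\<alpha> x) (\<alpha> y)"
  by (simp add: vertex_le_fm_def vertex_le_def)

lemma sat_edge_le_fm [simp]: "x < n \<Longrightarrow> y < n \<Longrightarrow>
  sat A R \<alpha> \<beta> (edge_le_fm s n x y) = edge_le A R \<beta> s (\<alpha> x) (\<alpha> y)"
  by (simp add: edge_le_fm_def edge_le_def)

lemma sat_order_fm: "sat A R \<alpha> \<beta> (order_fm s) = element_le A R \<beta> s (\<alpha> 0) (\<alpha> 1)"
  by (simp add: order_fm_def element_le_def)

lemma vars_order_fm: "fvars (order_fm s) \<subseteq> {0, 1}" "svars (order_fm s) \<subseteq> {..<8 + s}"
  by (auto simp: order_fm_def edge_le_fm_def vertex_le_fm_def code_less_fm_def lex_less_fm_def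
      lex_eq_fm_def edge_bit_fm_def path_le_fm_def path_succ_fm_def)


section \<open>Ordering graphs whose largest part is small\<close>

text \<open>A largest part B is split into B0, of size at most one more than the number of remaining
  vertices R, and the coded part B1; the vertices of V0 = R \<union> B0 are enumerated by a path.\<close>

locale part_bounded_graph = complete_multipartite_graph G d P for G :: "'v graph" and d P +
  fixes s :: nat
  assumes part_bound: "part_max d P \<le> 2 ^ (s * (part_sum d P - part_max d P + 1))"
    and nonempty: "fst G \<noteq> {}"
begin

definition big :: nat where "big = (SOME i. i < d \<and> card (P i) = part_max d P)"

lemma big: "big < d" "card (P big) = part_max d P"
proof -
  obtain i where "i < d" "card (P i) = part_max d P"
    using part_max_attained[OF part_max_pos[OF nonempty]] .
  then show "big < d" "card (P big) = part_max d P"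
    unfolding big_def by (metis (mono_tags, lifting) someI)+
qed

definition "B = P big"
definition "R = V - B"

definition B0 :: "'v set" where "B0 = (SOME X. X \<subseteq> B \<and> card X = min (card B) (Suc (card R)))"

definition "B1 = B - B0"
definition "V0 = R \<union> B0"

lemma B0: "B0 \<subseteq> B" "card B0 = min (card B) (Suc (card R))"
proof -
  have "\<exists>X. X \<subseteq> B \<and> card X = min (card B) (Suc (card R))"
    by (meson min.cobounded1 obtain_subset_with_card_n)
  from someI_ex[OF this] show "B0 \<subseteq> B" "card B0 = min (card B) (Suc (card R))"
    by (auto simp: B0_def)
qed

lemma B_subset: "B \<subseteq> V" using part_subset big by (simp add: B_def)
lemma finite_B: "finite B" using finite_part big by (simp add: B_def)
lemma finite_R: "finite R" using finite_vertices by (simp add: R_def)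
lemma finite_V0: "finite V0" using finite_R B0 finite_B finite_subset by (auto simp: V0_def)
lemma part_of_B: "v \<in> B \<Longrightarrow> part_of v = big" using part_of_eq big by (simp add: B_def)
lemma part_of_R: "v \<in> R \<Longrightarrow> part_of v \<noteq> big"
  using part_of_in[of v] by (auto simp: R_def B_def)
lemma card_R: "card R = part_sum d P - part_max d P"
  using card_outside_part big by (simp add: R_def B_def)

lemma vertex_cases: "v \<in> V \<longleftrightarrow> v \<in> V0 \<or> v \<in> B1"
  using B0 B_subset by (auto simp: V0_def B1_def R_def)

lemma V0_B1_disjoint: "v \<in> V0 \<Longrightarrow> v \<notin> B1"
  by (auto simp: V0_def B1_def R_def)

lemma B1_not_in_V0: "v \<in> B1 \<Longrightarrow> v \<notin> V0"
  using V0_B1_disjoint by blast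

lemma R_subset_V0: "R \<subseteq> V0" by (simp add: V0_def)

lemma B1_subset_B: "B1 \<subseteq> B" by (auto simp: B1_def)

lemma edge_B_R: "u \<in> B \<Longrightarrow> w \<in> R \<Longrightarrow> {u, w} \<in> E"
  using edge_iff[of u w] part_of_B[of u] part_of_R[of w] B_subset by (auto simp: R_def)

lemma V0_balanced: "2 * card {v\<in>V0. part_of v = p} \<le> card V0 + 1"
proof -
  have card_V0: "card V0 = card R + card B0"
    unfolding V0_def
    by (rule card_Un_disjoint) (use finite_R B0 finite_B finite_subset in \<open>auto simp: R_def\<close>)
  show ?thesis
  proof (cases "p = big")
    case True
    then have "{v\<in>V0. part_of v = p} = B0" using part_of_B part_of_R B0 by (auto simp: V0_def)
    then show ?thesis using B0 card_V0 by auto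
  next
    case False
    then have eq: "{v\<in>V0. part_of v = p} = {v\<in>R. part_of v = p}"
      using part_of_B B0 by (auto simp: V0_def)
    have "card {v\<in>R. part_of v = p} \<le> card R" by (rule card_mono[OF finite_R]) auto
    moreover have "card {v\<in>R. part_of v = p} \<le> card B"
    proof (cases "p < d")
      case True
      have "card {v\<in>R. part_of v = p} \<le> card (P p)"
        using True finite_part part_of_in by (intro card_mono) (auto simp: R_def)
      also have "\<dots> \<le> card B" using card_part_le_part_max[OF True] big by (simp add: B_def)
      finally show ?thesis .
    next
      case False
      then have "{v\<in>R. part_of v = p} = {}" using part_of_in by (auto simp: R_def)
      then show ?thesis by (simp only: card.empty)
    qed
    ultimately show ?thesis using eq card_V0 B0(2) by auto
  qed
qed

definition path :: "'v list" where
  "path = (SOME xs. distinct xs \<and> set xs = V0 \<and> successively (\<lambda>a b. part_of a \<noteq> part_of b) xs)"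

lemma path: "distinct path" "set path = V0" "successively (\<lambda>a b. part_of a \<noteq> part_of b) path"
proof -
  obtain xs where "distinct xs" "set xs = V0" "successively (\<lambda>a b. part_of a \<noteq> part_of b) xs"
    using alternating_enumeration[OF finite_V0] V0_balanced by blast
  then show "distinct path" "set path = V0" "successively (\<lambda>a b. part_of a \<noteq> part_of b) path"
    unfolding path_def by (metis (mono_tags, lifting) someI)+
qed

lemma path_in_V: "m < length path \<Longrightarrow> path ! m \<in> V"
  using path(2) vertex_cases nth_mem by blast

lemma path_nth_eq_iff: "m < length path \<Longrightarrow> m' < length path \<Longrightarrow> path ! m = path ! m' \<longleftrightarrow> m = m'"
  using path(1) by (simp add: nth_eq_iff_index_eq)

lemma V0_on_path: "v \<in> V0 \<Longrightarrow> \<exists>m<length path. v = path ! m"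
  by (metis in_set_conv_nth path(2))

lemma path_edge: "Suc m < length path \<Longrightarrow> {path ! m, path ! Suc m} \<in> E"
  using successively_nth[OF path(3)] path_in_V edge_iff by simp

definition code_of :: "'v \<Rightarrow> 'v option \<Rightarrow> bool list" where
  "code_of = (SOME c. c ` B1 \<subseteq> profiles R s \<and> inj_on c B1)"

lemma finite_B1: "finite B1"
  using finite_B B1_subset_B finite_subset by blast

lemma code_of: "code_of ` B1 \<subseteq> profiles R s" "inj_on code_of B1"
proof -
  have "card B1 \<le> card B" using finite_B by (intro card_mono) (auto simp: B1_def)
  also have "\<dots> = part_max d P" using big by (simp add: B_def)
  also have "\<dots> \<le> 2 ^ (s * (card R + 1))" using part_bound by (simp only: card_R)
  also have "\<dots> = card (profiles R s)" by (rule card_profiles[OF finite_R, symmetric])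
  finally obtain c where "c ` B1 \<subseteq> profiles R s" "inj_on c B1"
    using card_le_inj[OF finite_B1 finite_profiles[OF finite_R]] by blast
  then have "\<exists>c. c ` B1 \<subseteq> profiles R s \<and> inj_on c B1" by blast
  from someI_ex[OF this] show "code_of ` B1 \<subseteq> profiles R s" "inj_on code_of B1"
    unfolding code_of_def by blast+
qed

lemma length_code_of:
  assumes "u \<in> B1" "x \<in> insert None (Some ` R)"
  shows "length (code_of u x) = s"
proof -
  have "code_of u \<in> profiles R s" using code_of(1) assms(1) by blast
  from PiE_mem[OF this[unfolded profiles_def] assms(2)] show ?thesis by simp
qed

definition code_bits :: "nat \<Rightarrow> ('v + 'v set) set" where
  "code_bits j = Inl ` {u\<in>B1. code_of u None ! j} \<union>
     Inr ` {{u, w} | u w. u \<in> B1 \<and> w \<in> R \<and> code_of u (Some w) ! j}"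

definition path_colour :: "nat \<Rightarrow> ('v + 'v set) set" where
  "path_colour c = Inl ` {path ! m | m. m < length path \<and> m mod 3 = c}"

definition path_edges :: "('v + 'v set) set" where
  "path_edges = {Inr {path ! m, path ! Suc m} | m. Suc m < length path}"

definition params :: "nat \<Rightarrow> ('v + 'v set) set" where
  "params i =
    (if i = 0 then Inl ` V
     else if i \<le> 3 then path_colour (i - 1)
     else if i = 4 then path_edges
     else if i = 5 then Inl ` B1
     else if i = 6 then Inl ` V0
     else if 8 \<le> i \<and> i < 8 + s then code_bits (i - 8)
     else {})"

lemma params_subset: "params i \<subseteq> universe"
proof -
  have vertices: "Inl ` V \<subseteq> universe" by (simp add: universe_eq)
  have "B1 \<subseteq> V" "V0 \<subseteq> V" using vertex_cases by auto
  then have B1: "Inl ` B1 \<subseteq> universe" and V0: "Inl ` V0 \<subseteq> universe" using vertices by auto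
  have "code_bits j \<subseteq> universe" for j
  proof -
    have "{u\<in>B1. code_of u None ! j} \<subseteq> V" using \<open>B1 \<subseteq> V\<close> by blast
    moreover have "{{u, w} | u w. u \<in> B1 \<and> w \<in> R \<and> code_of u (Some w) ! j} \<subseteq> E"
      using edge_B_R B1_subset_B by blast
    ultimately show ?thesis unfolding code_bits_def universe_eq by (intro Un_mono image_mono)
  qed
  moreover have "path_colour c \<subseteq> universe" for c
    using path_in_V vertices by (auto simp: path_colour_def)
  moreover have "path_edges \<subseteq> universe"
    using path_edge by (auto simp: path_edges_def universe_eq)
  ultimately show ?thesis using vertices B1 V0 unfolding params_def by simp
qed
end


context part_bounded_graph
begin

lemma params_simps:
  "params 0 = Inl ` V" "params 1 = path_colour 0" "params 2 = path_colour 1" "params 3 = path_colour 2"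
  "params 4 = path_edges" "params 5 = Inl ` B1" "params 6 = Inl ` V0"
  "j < s \<Longrightarrow> params (8 + j) = code_bits j"
  by (simp_all add: params_def)

lemma in_path_colour: "x \<in> path_colour c \<longleftrightarrow> (\<exists>m<length path. x = Inl (path ! m) \<and> m mod 3 = c)"
  by (auto simp: path_colour_def)

lemma path_colour_step:
  "((x \<in> params 1 \<and> y \<in> params 2) \<or> (x \<in> params 2 \<and> y \<in> params 3) \<or> (x \<in> params 3 \<and> y \<in> params 1))
   \<longleftrightarrow> (\<exists>m1 m2. m1 < length path \<and> m2 < length path \<and> x = Inl (path ! m1) \<and> y = Inl (path ! m2) \<and>
          (m1 mod 3 = 0 \<and> m2 mod 3 = 1 \<or> m1 mod 3 = 1 \<and> m2 mod 3 = 2 \<or> m1 mod 3 = 2 \<and> m2 mod 3 = 0))"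
  (is "?colours \<longleftrightarrow> ?positions")
proof
  assume ?colours
  then obtain c1 c2 where "x \<in> path_colour c1" "y \<in> path_colour c2"
    and c: "c1 = 0 \<and> c2 = 1 \<or> c1 = 1 \<and> c2 = 2 \<or> c1 = 2 \<and> c2 = 0"
    unfolding params_simps by blast
  then obtain m1 m2 where "m1 < length path" "x = Inl (path ! m1)" "m1 mod 3 = c1"
    "m2 < length path" "y = Inl (path ! m2)" "m2 mod 3 = c2"
    unfolding in_path_colour by auto
  then show ?positions using c by - (rule exI[of _ m1], rule exI[of _ m2], auto)
next
  assume ?positions
  then obtain m1 m2 where "m1 < length path" "m2 < length path" "x = Inl (path ! m1)" "y = Inl (path ! m2)"
    and step: "m1 mod 3 = 0 \<and> m2 mod 3 = 1 \<or> m1 mod 3 = 1 \<and> m2 mod 3 = 2 \<or> m1 mod 3 = 2 \<and> m2 mod 3 = 0"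
    by (elim exE conjE) (rule that; simp)
  then have "x \<in> path_colour (m1 mod 3)" "y \<in> path_colour (m2 mod 3)"
    unfolding in_path_colour by blast+
  then show ?colours using step unfolding params_simps by auto
qed

lemma path_succ_iff:
  "path_succ universe incidence params x y \<longleftrightarrow>
     (\<exists>m. Suc m < length path \<and> x = Inl (path ! m) \<and> y = Inl (path ! Suc m))"
proof
  assume "path_succ universe incidence params x y"
  then obtain e where e: "(x, e) \<in> incidence" "(y, e) \<in> incidence" "e \<in> params 4"
    and "(x \<in> params 1 \<and> y \<in> params 2) \<or> (x \<in> params 2 \<and> y \<in> params 3) \<or> (x \<in> params 3 \<and> y \<in> params 1)"
    unfolding path_succ_def by blast
  then obtain m1 m2 where m: "m1 < length path" "m2 < length path" "x = Inl (path ! m1)"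
      "y = Inl (path ! m2)"
      "m1 mod 3 = 0 \<and> m2 mod 3 = 1 \<or> m1 mod 3 = 1 \<and> m2 mod 3 = 2 \<or> m1 mod 3 = 2 \<and> m2 mod 3 = 0"
    unfolding path_colour_step by (elim exE conjE) (rule that; simp)
  from e(3) obtain m where m_e: "Suc m < length path" "e = Inr {path ! m, path ! Suc m}"
    by (auto simp: params_simps path_edges_def)
  have "path ! m1 \<in> {path ! m, path ! Suc m}" "path ! m2 \<in> {path ! m, path ! Suc m}"
    using e(1,2) m(3,4) m_e(2) incidence_iff by auto
  then have "m1 \<in> {m, Suc m}" "m2 \<in> {m, Suc m}"
    using path_nth_eq_iff m(1,2) m_e(1) by auto
  then have "m1 = m \<and> m2 = Suc m" using m(5) by auto presburger+
  then show "\<exists>m. Suc m < length path \<and> x = Inl (path ! m) \<and> y = Inl (path ! Suc m)"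
    using m m_e(1) by blast
next
  assume "\<exists>m. Suc m < length path \<and> x = Inl (path ! m) \<and> y = Inl (path ! Suc m)"
  then obtain m where m: "Suc m < length path" "x = Inl (path ! m)" "y = Inl (path ! Suc m)" by blast
  let ?e = "Inr {path ! m, path ! Suc m} :: 'v + 'v set"
  have "?e \<in> universe" using path_edge[OF m(1)] by (simp add: universe_eq)
  moreover have "?e \<in> params 4" unfolding params_simps path_edges_def using m(1) by blast
  moreover have "(x, ?e) \<in> incidence" "(y, ?e) \<in> incidence"
    using m path_in_V path_edge[OF m(1)] by (auto simp: incidence_iff)
  moreover have "(x \<in> params 1 \<and> y \<in> params 2) \<or> (x \<in> params 2 \<and> y \<in> params 3) \<or> (x \<in> params 3 \<and> y \<in> params 1)"
    unfolding path_colour_step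
    by (rule exI[of _ m], rule exI[of _ "Suc m"]) (use m in \<open>simp, presburger\<close>)
  ultimately show "path_succ universe incidence params x y"
    unfolding path_succ_def by blast
qed

lemma path_le_iff:
  assumes m: "m < length path"
  shows "path_le universe incidence params (Inl (path ! m)) y \<longleftrightarrow>
    (\<exists>m'. m \<le> m' \<and> m' < length path \<and> y = Inl (path ! m'))"
proof
  assume le: "path_le universe incidence params (Inl (path ! m)) y"
  let ?X = "{Inl (path ! m') | m'. m \<le> m' \<and> m' < length path} :: ('v + 'v set) set"
  have "?X \<subseteq> universe" using path_in_V universe_eq by auto
  moreover have "Inl (path ! m) \<in> ?X" using m by auto
  moreover have "\<forall>u\<in>universe. \<forall>v\<in>universe. u \<in> ?X \<longrightarrow> path_succ universe incidence params u v \<longrightarrow> v \<in> ?X"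
    using path_nth_eq_iff by (fastforce simp: path_succ_iff)
  ultimately have "y \<in> ?X" using le unfolding path_le_def by blast
  then show "\<exists>m'. m \<le> m' \<and> m' < length path \<and> y = Inl (path ! m')" by auto
next
  assume "\<exists>m'. m \<le> m' \<and> m' < length path \<and> y = Inl (path ! m')"
  then obtain m' where m': "m \<le> m'" "m' < length path" "y = Inl (path ! m')" by blast
  show "path_le universe incidence params (Inl (path ! m)) y" unfolding path_le_def
  proof (intro allI impI)
    fix X assume X: "X \<subseteq> universe" "Inl (path ! m) \<in> X"
      "\<forall>u\<in>universe. \<forall>v\<in>universe. u \<in> X \<longrightarrow> path_succ universe incidence params u v \<longrightarrow> v \<in> X"
    have "m + k < length path \<longrightarrow> Inl (path ! (m + k)) \<in> X" for k
    proof (induction k)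
      case (Suc k)
      show ?case
      proof
        assume lt: "m + Suc k < length path"
        then have "Inl (path ! Suc (m + k)) \<in> universe" using path_in_V universe_eq by auto
        moreover have "path_succ universe incidence params (Inl (path ! (m + k))) (Inl (path ! Suc (m + k)))"
          using lt by (auto simp: path_succ_iff)
        ultimately show "Inl (path ! (m + Suc k)) \<in> X" using Suc lt X(1,3) by auto
      qed
    qed (use X in simp)
    from this[of "m' - m"] show "y \<in> X" using m' by simp
  qed
qed

lemma path_le_nth:
  "m' < length path \<Longrightarrow> m < length path \<Longrightarrow>
    path_le universe incidence params (Inl (path ! m')) (Inl (path ! m)) \<longleftrightarrow> m' \<le> m"
  using path_le_iff path_nth_eq_iff by auto

lemma ex_on_path: "(\<exists>w\<in>universe. w \<in> params 6 \<and> Q w) \<longleftrightarrow> (\<exists>m<length path. Q (Inl (path ! m)))"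
proof
  assume "\<exists>w\<in>universe. w \<in> params 6 \<and> Q w"
  then obtain v where "v \<in> V0" "Q (Inl v)" by (auto simp: params_simps)
  then show "\<exists>m<length path. Q (Inl (path ! m))" using V0_on_path by blast
next
  assume "\<exists>m<length path. Q (Inl (path ! m))"
  then obtain m where m: "m < length path" "Q (Inl (path ! m))" by blast
  then have "Inl (path ! m) \<in> universe" "Inl (path ! m) \<in> params 6"
    using path_in_V path(2) by (auto simp: universe_eq params_simps)
  then show "\<exists>w\<in>universe. w \<in> params 6 \<and> Q w" using m(2) by blast
qed

lemma all_before_on_path:
  assumes "m < length path"
  shows "(\<forall>w\<in>universe. w \<in> params 6 \<and> path_le universe incidence params w (Inl (path ! m)) \<and>
            w \<noteq> Inl (path ! m) \<longrightarrow> Q w) \<longleftrightarrow> (\<forall>m'<m. Q (Inl (path ! m')))"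
proof
  assume H: "\<forall>w\<in>universe. w \<in> params 6 \<and> path_le universe incidence params w (Inl (path ! m)) \<and>
            w \<noteq> Inl (path ! m) \<longrightarrow> Q w"
  show "\<forall>m'<m. Q (Inl (path ! m'))"
  proof (intro allI impI)
    fix m' assume "m' < m"
    then have "Inl (path ! m') \<in> universe" "Inl (path ! m') \<in> params 6"
      "path_le universe incidence params (Inl (path ! m')) (Inl (path ! m))"
      "Inl (path ! m') \<noteq> (Inl (path ! m) :: 'v + 'v set)"
      using assms path_in_V path(2) path_le_nth path_nth_eq_iff by (auto simp: params_simps universe_eq)
    then show "Q (Inl (path ! m'))" using H by blast
  qed
next
  assume H: "\<forall>m'<m. Q (Inl (path ! m'))"
  show "\<forall>w\<in>universe. w \<in> params 6 \<and> path_le universe incidence params w (Inl (path ! m)) \<and>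
          w \<noteq> Inl (path ! m) \<longrightarrow> Q w"
  proof (intro ballI impI)
    fix w assume w: "w \<in> params 6 \<and> path_le universe incidence params w (Inl (path ! m)) \<and> w \<noteq> Inl (path ! m)"
    then obtain m' where m': "m' < length path" "w = Inl (path ! m')"
      using V0_on_path by (auto simp: params_simps)
    then have "m' < m" using w assms path_le_nth by fastforce
    then show "Q w" using H m'(2) by simp
  qed
qed

end


context part_bounded_graph
begin

definition edge_code :: "'v \<Rightarrow> 'v \<Rightarrow> bool list" where
  "edge_code u w = (if w \<in> R then code_of u (Some w) else replicate s False)"

definition code :: "'v \<Rightarrow> bool list list" where
  "code u = code_of u None # map (edge_code u) path"

lemma length_edge_code: "u \<in> B1 \<Longrightarrow> length (edge_code u w) = s"
  using length_code_of by (simp add: edge_code_def)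

lemma self_bit: "j < s \<Longrightarrow> Inl u \<in> params (8 + j) \<longleftrightarrow> u \<in> B1 \<and> code_of u None ! j"
  by (auto simp: params_simps code_bits_def)

lemma edge_bit_iff:
  assumes u: "u \<in> B1" and w: "w \<in> V0" and j: "j < s"
  shows "edge_bit universe incidence params (Inl u) (Inl w) j \<longleftrightarrow> edge_code u w ! j"
proof
  assume "edge_bit universe incidence params (Inl u) (Inl w) j"
  then obtain e where e: "(Inl u, e) \<in> incidence" "(Inl w, e) \<in> incidence" "e \<in> code_bits j"
    unfolding edge_bit_def params_simps(8)[OF j] by blast
  then obtain e' where e': "e = Inr e'" "u \<in> e'" "w \<in> e'" by (auto simp: incidence_iff)
  with e(3) obtain u' w' where uw: "e' = {u', w'}" "u' \<in> B1" "w' \<in> R" "code_of u' (Some w') ! j"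
    unfolding code_bits_def by auto
  have "u' \<notin> R" "w' \<notin> B1" using uw(2,3) B1_subset_B by (auto simp: R_def B1_def)
  then have "u = u'" "w = w'" using uw(1-3) e'(2,3) u w V0_B1_disjoint R_subset_V0 by auto
  then show "edge_code u w ! j" using uw by (simp add: edge_code_def)
next
  assume bit: "edge_code u w ! j"
  then have "w \<in> R" using j by (auto simp: edge_code_def split: if_splits)
  let ?e = "Inr {u, w} :: 'v + 'v set"
  have "{u, w} \<in> E" using edge_B_R u B1_subset_B \<open>w \<in> R\<close> by blast
  then have "?e \<in> universe" "(Inl u, ?e) \<in> incidence" "(Inl w, ?e) \<in> incidence"
    using u B1_subset_B B_subset \<open>w \<in> R\<close> by (auto simp: universe_eq incidence_iff R_def)
  moreover have "?e \<in> params (8 + j)"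
    using bit u \<open>w \<in> R\<close> unfolding params_simps(8)[OF j] code_bits_def edge_code_def by auto
  ultimately show "edge_bit universe incidence params (Inl u) (Inl w) j"
    unfolding edge_bit_def by blast
qed

lemma code_inj: "inj_on code B1"
proof (rule inj_onI)
  fix u v assume uv: "u \<in> B1" "v \<in> B1" "code u = code v"
  have "code_of u x = code_of v x" for x
  proof (cases "x \<in> insert None (Some ` R)")
    case True
    then consider "x = None" | w where "w \<in> R" "x = Some w" by blast
    then show ?thesis
    proof cases
      case 1 then show ?thesis using uv(3) by (simp add: code_def)
    next
      case 2
      then obtain m where m: "m < length path" "w = path ! m" using V0_on_path[of w] R_subset_V0 by auto
      have "map (edge_code u) path = map (edge_code v) path" using uv(3) by (simp add: code_def)
      then have "edge_code u w = edge_code v w" using m by (metis nth_map)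
      then show ?thesis using 2 by (simp add: edge_code_def)
    qed
  next
    case False
    have "code_of u \<in> profiles R s" "code_of v \<in> profiles R s" using code_of(1) uv(1,2) by auto
    then have "code_of u x = undefined" "code_of v x = undefined"
      using PiE_arb False unfolding profiles_def by fastforce+
    then show ?thesis by simp
  qed
  then have "code_of u = code_of v" by blast
  then show "u = v" using code_of(2) uv(1,2) by (meson inj_onD)
qed

lemma self_bits_less_iff:
  assumes "u \<in> B1" "v \<in> B1"
  shows "lex_bits_less s (\<lambda>j. Inl u \<in> params (8 + j)) (\<lambda>j. Inl v \<in> params (8 + j))
    \<longleftrightarrow> code_of u None < code_of v None"
  using lex_bits_less_cong[of s "\<lambda>j. Inl u \<in> params (8 + j)" "(!) (code_of u None)"
      "\<lambda>j. Inl v \<in> params (8 + j)" "(!) (code_of v None)"]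
    self_bit assms lex_bits_less_iff_less[of "code_of u None" s "code_of v None"] length_code_of
  by simp

lemma self_bits_eq_iff:
  assumes "u \<in> B1" "v \<in> B1"
  shows "(\<forall>j<s. Inl u \<in> params (8 + j) \<longleftrightarrow> Inl v \<in> params (8 + j)) \<longleftrightarrow> code_of u None = code_of v None"
  using self_bit assms length_code_of[of _ None] by (auto simp: list_eq_iff_nth_eq)

lemma edge_bits_eq_iff:
  assumes "u \<in> B1" "v \<in> B1" "w \<in> V0"
  shows "(\<forall>j<s. edge_bit universe incidence params (Inl u) (Inl w) j \<longleftrightarrow>
      edge_bit universe incidence params (Inl v) (Inl w) j) \<longleftrightarrow> edge_code u w = edge_code v w"
  using edge_bit_iff[OF assms(1,3)] edge_bit_iff[OF assms(2,3)] length_edge_code assms(1,2)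
  by (auto simp: list_eq_iff_nth_eq)

lemma edge_bits_less_iff:
  assumes "u \<in> B1" "v \<in> B1" "w \<in> V0"
  shows "lex_bits_less s (edge_bit universe incidence params (Inl u) (Inl w))
      (edge_bit universe incidence params (Inl v) (Inl w)) \<longleftrightarrow> edge_code u w < edge_code v w"
  using lex_bits_less_cong[of s "edge_bit universe incidence params (Inl u) (Inl w)" "(!) (edge_code u w)"
      "edge_bit universe incidence params (Inl v) (Inl w)" "(!) (edge_code v w)"]
    edge_bit_iff[OF assms(1,3)] edge_bit_iff[OF assms(2,3)]
    lex_bits_less_iff_less[of "edge_code u w" s "edge_code v w"] length_edge_code assms(1,2)
  by simp

lemma edge_codes_less_iff:
  assumes u: "u \<in> B1" and v: "v \<in> B1"
  shows "(\<exists>w\<in>universe. w \<in> params 6 \<and>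
      (\<forall>w'\<in>universe. w' \<in> params 6 \<and> path_le universe incidence params w' w \<and> w' \<noteq> w \<longrightarrow>
         (\<forall>j<s. edge_bit universe incidence params (Inl u) w' j \<longleftrightarrow>
                edge_bit universe incidence params (Inl v) w' j)) \<and>
      lex_bits_less s (edge_bit universe incidence params (Inl u) w)
        (edge_bit universe incidence params (Inl v) w))
    \<longleftrightarrow> map (edge_code u) path < map (edge_code v) path"
proof -
  have on_path: "path ! m \<in> V0" if "m < length path" for m using nth_mem[OF that] path(2) by blast
  have "map (edge_code u) path < map (edge_code v) path \<longleftrightarrow>
      (\<exists>m<length path. (\<forall>m'<m. edge_code u (path ! m') = edge_code v (path ! m')) \<and>
         edge_code u (path ! m) < edge_code v (path ! m))"
    by (subst list_less_iff_nth) auto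
  then show ?thesis
    unfolding ex_on_path
  proof (elim ssubst, intro ex_cong1 conj_cong refl)
    fix m assume m: "m < length path"
    show "(\<forall>w'\<in>universe. w' \<in> params 6 \<and> path_le universe incidence params w' (Inl (path ! m)) \<and>
            w' \<noteq> Inl (path ! m) \<longrightarrow> (\<forall>j<s. edge_bit universe incidence params (Inl u) w' j \<longleftrightarrow>
              edge_bit universe incidence params (Inl v) w' j))
        \<longleftrightarrow> (\<forall>m'<m. edge_code u (path ! m') = edge_code v (path ! m'))"
      unfolding all_before_on_path[OF m] using m on_path edge_bits_eq_iff[OF u v] by simp
    show "lex_bits_less s (edge_bit universe incidence params (Inl u) (Inl (path ! m)))
          (edge_bit universe incidence params (Inl v) (Inl (path ! m)))
        \<longleftrightarrow> edge_code u (path ! m) < edge_code v (path ! m)"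
      using edge_bits_less_iff[OF u v on_path[OF m]] .
  qed
qed

lemma code_less_iff:
  assumes "u \<in> B1" and "v \<in> B1"
  shows "code_less universe incidence params s (Inl u) (Inl v) \<longleftrightarrow> code u < code v"
  unfolding code_less_def code_def Cons_less_Cons self_bits_less_iff[OF assms] self_bits_eq_iff[OF assms]
    edge_codes_less_iff[OF assms] ..

end


context part_bounded_graph
begin

definition path_pos :: "'v \<Rightarrow> nat" where
  "path_pos v = (THE m. m < length path \<and> path ! m = v)"

lemma path_pos_nth: "m < length path \<Longrightarrow> path_pos (path ! m) = m"
  unfolding path_pos_def using path_nth_eq_iff by (intro the_equality) auto

definition vertex_key :: "'v \<Rightarrow> nat \<times> nat \<times> bool list list" where
  "vertex_key v = (if v \<in> V0 then (0, path_pos v, []) else (1, 0, code v))"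

lemma vertex_le_iff:
  assumes a: "a \<in> V" and b: "b \<in> V"
  shows "vertex_le universe incidence params s (Inl a) (Inl b) \<longleftrightarrow> vertex_key a \<le> vertex_key b"
proof -
  have coded: "Inl x \<in> params 5 \<longleftrightarrow> x \<in> B1" for x by (auto simp: params_simps)
  consider "a \<in> V0" "b \<in> V0" | "a \<in> V0" "b \<in> B1" | "a \<in> B1" "b \<in> V0" | "a \<in> B1" "b \<in> B1"
    using a b vertex_cases by blast
  then show ?thesis
  proof cases
    case 1
    then obtain ma mb where m: "ma < length path" "a = path ! ma" "mb < length path" "b = path ! mb"
      using V0_on_path by blast
    then have "vertex_le universe incidence params s (Inl a) (Inl b) \<longleftrightarrow> ma \<le> mb"
      using 1 V0_B1_disjoint path_le_nth by (simp add: vertex_le_def coded)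
    also have "\<dots> \<longleftrightarrow> vertex_key a \<le> vertex_key b" using 1 m path_pos_nth by (auto simp: vertex_key_def)
    finally show ?thesis .
  next
    case 2
    then show ?thesis using V0_B1_disjoint B1_not_in_V0 by (simp add: vertex_le_def coded vertex_key_def)
  next
    case 3
    then show ?thesis using V0_B1_disjoint B1_not_in_V0 by (simp add: vertex_le_def coded vertex_key_def)
  next
    case 4
    then have "vertex_le universe incidence params s (Inl a) (Inl b) \<longleftrightarrow> a = b \<or> code a < code b"
      using code_less_iff by (simp add: vertex_le_def coded)
    also have "\<dots> \<longleftrightarrow> code a \<le> code b" using 4 inj_onD[OF code_inj] by (auto simp: le_less)
    also have "\<dots> \<longleftrightarrow> vertex_key a \<le> vertex_key b" using 4 B1_not_in_V0 by (simp add: vertex_key_def)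
    finally show ?thesis .
  qed
qed

lemma vertex_key_inj: "inj_on vertex_key V"
proof (rule inj_onI)
  fix a b assume ab: "a \<in> V" "b \<in> V" "vertex_key a = vertex_key b"
  consider "a \<in> V0" "b \<in> V0" | "a \<in> V0" "b \<in> B1" | "a \<in> B1" "b \<in> V0" | "a \<in> B1" "b \<in> B1"
    using ab vertex_cases by blast
  then show "a = b"
  proof cases
    case 1
    then obtain ma mb where "ma < length path" "a = path ! ma" "mb < length path" "b = path ! mb"
      using V0_on_path by blast
    then show ?thesis using ab 1 path_pos_nth by (simp add: vertex_key_def)
  next
    case 4
    then have "a \<notin> V0" "b \<notin> V0" using V0_B1_disjoint by auto
    then show ?thesis using ab 4 inj_onD[OF code_inj] by (simp add: vertex_key_def)
  qed (use ab V0_B1_disjoint B1_not_in_V0 in \<open>simp_all add: vertex_key_def\<close>)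
qed

lemma edge_ends_ordered:
  assumes "e \<in> E"
  obtains lo hi where "e = {lo, hi}" "lo \<in> V" "hi \<in> V" "vertex_key lo < vertex_key hi"
proof -
  obtain a b where ab: "e = {a, b}" "a \<in> V" "b \<in> V" "part_of a \<noteq> part_of b"
    using assms by (rule edgeE)
  then have "vertex_key a \<noteq> vertex_key b" using inj_onD[OF vertex_key_inj] by metis
  then show ?thesis
    using that ab by (cases "vertex_key a < vertex_key b") (auto simp: insert_commute)
qed

lemma incident_pair_iff:
  assumes e: "e = {lo, hi}" "e \<in> E" "lo \<in> V" "hi \<in> V" "vertex_key lo < vertex_key hi"
    and pq: "p \<in> universe" "q \<in> universe"
  shows "(p, Inr e) \<in> incidence \<and> (q, Inr e) \<in> incidence \<and>
      vertex_le universe incidence params s p q \<and> p \<noteq> q \<longleftrightarrow> p = Inl lo \<and> q = Inl hi"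
proof
  assume H: "(p, Inr e) \<in> incidence \<and> (q, Inr e) \<in> incidence \<and>
    vertex_le universe incidence params s p q \<and> p \<noteq> q"
  then obtain a b where ab: "p = Inl a" "q = Inl b" "a \<in> e" "b \<in> e" "a \<in> V" "b \<in> V"
    by (auto simp: incidence_iff)
  then have "vertex_key a \<le> vertex_key b" "a \<noteq> b" using H vertex_le_iff by auto
  then show "p = Inl lo \<and> q = Inl hi" using ab e by auto
next
  assume "p = Inl lo \<and> q = Inl hi"
  then show "(p, Inr e) \<in> incidence \<and> (q, Inr e) \<in> incidence \<and>
    vertex_le universe incidence params s p q \<and> p \<noteq> q"
    using e vertex_le_iff by (auto simp: incidence_iff)
qed

lemma edge_le_iff:
  assumes e1: "e1 = {lo1, hi1}" "e1 \<in> E" "lo1 \<in> V" "hi1 \<in> V" "vertex_key lo1 < vertex_key hi1"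
    and e2: "e2 = {lo2, hi2}" "e2 \<in> E" "lo2 \<in> V" "hi2 \<in> V" "vertex_key lo2 < vertex_key hi2"
  shows "edge_le universe incidence params s (Inr e1) (Inr e2) \<longleftrightarrow>
    (vertex_key lo1, vertex_key hi1) \<le> (vertex_key lo2, vertex_key hi2)"
proof -
  have in_universe: "Inl lo1 \<in> universe" "Inl hi1 \<in> universe" "Inl lo2 \<in> universe" "Inl hi2 \<in> universe"
    using e1 e2 universe_eq by auto
  have "edge_le universe incidence params s (Inr e1) (Inr e2) \<longleftrightarrow>
      (vertex_le universe incidence params s (Inl lo1) (Inl lo2) \<and> lo1 \<noteq> lo2) \<or>
      (lo1 = lo2 \<and> vertex_le universe incidence params s (Inl hi1) (Inl hi2))"
    unfolding edge_le_def using incident_pair_iff[OF e1] incident_pair_iff[OF e2] in_universe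
    by (smt (verit, best) sum.inject(1))
  also have "\<dots> \<longleftrightarrow> (vertex_key lo1 \<le> vertex_key lo2 \<and> lo1 \<noteq> lo2) \<or> (lo1 = lo2 \<and> vertex_key hi1 \<le> vertex_key hi2)"
    using vertex_le_iff e1 e2 by auto
  also have "\<dots> \<longleftrightarrow> (vertex_key lo1, vertex_key hi1) \<le> (vertex_key lo2, vertex_key hi2)"
    using e1 e2 inj_onD[OF vertex_key_inj, of lo1 lo2] by (auto simp: less_le)
  finally show ?thesis .
qed

definition element_key ::
    "'v + 'v set \<Rightarrow> nat \<times> (nat \<times> nat \<times> bool list list) \<times> (nat \<times> nat \<times> bool list list)" where
  "element_key x = (case x of
      Inl v \<Rightarrow> (0, vertex_key v, vertex_key v)
    | Inr e \<Rightarrow> (1, Min (vertex_key ` e), Max (vertex_key ` e)))"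

lemma element_key_edge: "e = {lo, hi} \<Longrightarrow> vertex_key lo < vertex_key hi \<Longrightarrow>
    element_key (Inr e) = (1, vertex_key lo, vertex_key hi)"
  by (auto simp: element_key_def min_def max_def)

lemma element_le_iff:
  assumes "x \<in> universe" "y \<in> universe"
  shows "element_le universe incidence params s x y \<longleftrightarrow> element_key x \<le> element_key y"
proof -
  have vertices: "z \<in> params 0 \<longleftrightarrow> (\<exists>v. z = Inl v)" if "z \<in> universe" for z
    using that by (auto simp: params_simps universe_eq)
  show ?thesis
  proof (cases x; cases y)
    fix a b assume "x = Inl a" "y = Inl b"
    then show ?thesis using assms vertices vertex_le_iff
      by (auto simp: element_le_def element_key_def universe_eq)
  next
    fix a e assume "x = Inl a" "y = Inr e"
    then show ?thesis using assms vertices by (auto simp: element_le_def element_key_def)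
  next
    fix e b assume "x = Inr e" "y = Inl b"
    then show ?thesis using assms vertices by (auto simp: element_le_def element_key_def)
  next
    fix e1 e2 assume xy: "x = Inr e1" "y = Inr e2"
    then have "e1 \<in> E" "e2 \<in> E" using assms universe_eq by auto
    obtain lo1 hi1 where l1: "e1 = {lo1, hi1}" "lo1 \<in> V" "hi1 \<in> V" "vertex_key lo1 < vertex_key hi1"
      using \<open>e1 \<in> E\<close> by (rule edge_ends_ordered)
    obtain lo2 hi2 where l2: "e2 = {lo2, hi2}" "lo2 \<in> V" "hi2 \<in> V" "vertex_key lo2 < vertex_key hi2"
      using \<open>e2 \<in> E\<close> by (rule edge_ends_ordered)
    have "element_le universe incidence params s x y \<longleftrightarrow> edge_le universe incidence params s (Inr e1) (Inr e2)"
      using xy assms vertices by (auto simp: element_le_def)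
    also have "\<dots> \<longleftrightarrow> element_key x \<le> element_key y"
      using edge_le_iff[OF l1(1) \<open>e1 \<in> E\<close> l1(2-4) l2(1) \<open>e2 \<in> E\<close> l2(2-4)]
        element_key_edge[OF l1(1,4)] element_key_edge[OF l2(1,4)] xy by simp
    finally show ?thesis .
  qed
qed

lemma element_key_inj: "inj_on element_key universe"
proof (rule inj_onI)
  fix x y assume xy: "x \<in> universe" "y \<in> universe" "element_key x = element_key y"
  show "x = y"
  proof (cases x; cases y)
    fix a b assume "x = Inl a" "y = Inl b"
    then show ?thesis using xy inj_onD[OF vertex_key_inj] by (auto simp: element_key_def universe_eq)
  next
    fix e1 e2 assume xy': "x = Inr e1" "y = Inr e2"
    then have "e1 \<in> E" "e2 \<in> E" using xy universe_eq by auto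
    obtain lo1 hi1 where l1: "e1 = {lo1, hi1}" "lo1 \<in> V" "hi1 \<in> V" "vertex_key lo1 < vertex_key hi1"
      using \<open>e1 \<in> E\<close> by (rule edge_ends_ordered)
    obtain lo2 hi2 where l2: "e2 = {lo2, hi2}" "lo2 \<in> V" "hi2 \<in> V" "vertex_key lo2 < vertex_key hi2"
      using \<open>e2 \<in> E\<close> by (rule edge_ends_ordered)
    have "vertex_key lo1 = vertex_key lo2" "vertex_key hi1 = vertex_key hi2"
      using xy(3) element_key_edge[OF l1(1,4)] element_key_edge[OF l2(1,4)] xy' by auto
    then show ?thesis using inj_onD[OF vertex_key_inj] l1 l2 xy' by auto
  qed (use xy in \<open>auto simp: element_key_def\<close>)
qed

lemma params_define_linear_order:
  "linear_order_on universe (defined_relation universe incidence (order_fm s) params)"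
proof -
  have "defined_relation universe incidence (order_fm s) params
      = {(a, b). a \<in> universe \<and> b \<in> universe \<and> element_key a \<le> element_key b}"
    using element_le_iff by (auto simp: defined_relation_def sat_order_fm)
  then show ?thesis using linear_order_on_key[OF element_key_inj] by simp
qed

end


context complete_multipartite_graph
begin

lemma part_max_bound_of_defines_order:
  assumes "defines_order \<phi> k {inc_structure G}"
  shows "part_max d P \<le> 2 ^ (k * (part_sum d P - part_max d P + 1))"
proof (cases "part_max d P = 0")
  case False
  then obtain i where "i < d" "card (P i) = part_max d P" using part_max_attained by blast
  then have "P i \<noteq> {}" using False by auto
  then have "universe \<noteq> {}" using part_subset[OF \<open>i < d\<close>] universe_eq by auto
  then obtain Q where Q: "\<forall>i<k. Q i \<subseteq> universe"
    and lin: "linear_order_on universe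
      (defined_relation universe incidence \<phi> (\<lambda>i. if i < k then Q i else {}))"
    using assms unfolding defines_order_singleton by blast
  from lin Q show ?thesis by (rule part_max_bound_of_definable_order)
qed simp

lemma defines_order_of_part_bound:
  assumes "part_max d P \<le> 2 ^ (s * (part_sum d P - part_max d P + 1))"
  shows "defines_order (order_fm s) (8 + s) {inc_structure G}"
proof -
  have "\<exists>Q. (\<forall>i<8 + s. Q i \<subseteq> universe) \<and>
      linear_order_on universe
        (defined_relation universe incidence (order_fm s) (\<lambda>i. if i < 8 + s then Q i else {}))"
    if "universe \<noteq> {}"
  proof -
    interpret part_bounded_graph G d P s
      using assms universe_nonempty[OF that] by unfold_locales auto
    have "(\<lambda>i. if i < 8 + s then params i else {}) = params" by (auto simp: params_def fun_eq_iff)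
    then show ?thesis using params_subset params_define_linear_order by (intro exI[of _ params]) simp
  qed
  then show ?thesis unfolding defines_order_singleton using vars_order_fm by blast
qed

end

definition part_max_bounded :: "'v graph set \<Rightarrow> nat \<Rightarrow> bool" where
  "part_max_bounded C s \<longleftrightarrow> (\<forall>G\<in>C. \<forall>d P. complete_multipartite G d P \<longrightarrow>
     part_max d P \<le> 2 ^ (s * (part_sum d P - part_max d P + 1)))"

lemma part_max_bounded_of_MSO2_orderable:
  assumes "\<forall>G\<in>C. finite_graph G" and "MSO2_orderable C"
  shows "\<exists>s. part_max_bounded C s"
proof -
  obtain \<phi> k where order: "defines_order \<phi> k (inc_structure ` C)"
    using assms(2) unfolding MSO2_orderable_def by blast
  have "part_max_bounded C k"
    unfolding part_max_bounded_def
  proof (intro ballI allI impI)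
    fix G d P assume "G \<in> C" "complete_multipartite G d P"
    then interpret complete_multipartite_graph G d P using assms(1) by unfold_locales auto
    show "part_max d P \<le> 2 ^ (k * (part_sum d P - part_max d P + 1))"
      using order \<open>G \<in> C\<close> defines_order_pointwise
      by (intro part_max_bound_of_defines_order[of \<phi>]) blast
  qed
  then show ?thesis ..
qed

lemma MSO2_orderable_of_part_max_bounded:
  assumes "\<forall>G\<in>C. finite_graph G \<and> (\<exists>d P. complete_multipartite G d P)" and "part_max_bounded C s"
  shows "MSO2_orderable C"
proof -
  have "defines_order (order_fm s) (8 + s) {inc_structure G}" if G: "G \<in> C" for G
  proof -
    obtain d P where cm: "complete_multipartite G d P" using assms(1) G by blast
    then interpret complete_multipartite_graph G d P using assms(1) G by unfold_locales auto
    show ?thesis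
      using assms(2) G cm unfolding part_max_bounded_def by (intro defines_order_of_part_bound) blast
  qed
  then have "defines_order (order_fm s) (8 + s) (inc_structure ` C)"
    using vars_order_fm defines_order_pointwise by blast
  then show ?thesis unfolding MSO2_orderable_def by blast
qed

lemma part_max_bounded_of_SEP:
  assumes "\<forall>G\<in>C. finite_graph G" and "has_SEP C (\<lambda>k. 2 ^ (s * (k + 1)))"
  shows "part_max_bounded C s"
  unfolding part_max_bounded_def
proof (intro ballI allI impI)
  fix G d P assume "G \<in> C" "complete_multipartite G d P"
  then interpret complete_multipartite_graph G d P using assms(1) by unfold_locales auto
  show "part_max d P \<le> 2 ^ (s * (part_sum d P - part_max d P + 1))"
    using part_max_le_Sep assms(2) \<open>G \<in> C\<close> unfolding has_SEP_def by (meson order_trans)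
qed

lemma SEP_of_part_max_bounded:
  assumes "\<forall>G\<in>C. finite_graph G \<and> (\<exists>d P. complete_multipartite G d P)" and "part_max_bounded C s"
  shows "has_SEP C (\<lambda>k. 2 ^ (s * (k + 1)))"
  unfolding has_SEP_def
proof (intro ballI allI)
  fix G k assume G: "G \<in> C"
  then obtain d P where cm: "complete_multipartite G d P" using assms(1) by blast
  then interpret complete_multipartite_graph G d P using assms(1) G by unfold_locales auto
  show "Sep G k \<le> 2 ^ (s * (k + 1))"
    using assms(2) G cm unfolding part_max_bounded_def by (intro Sep_le_part_bound) blast
qed

theorem theorem4p28:
  fixes C :: "'v graph set"
  assumes "\<forall>G\<in>C. finite_graph G \<and> (\<exists>d P. complete_multipartite G d P)"
  shows "(MSO2_orderable C \<longleftrightarrow> (\<exists>s::nat. has_SEP C (\<lambda>k. 2 ^ (s * (k + 1)))))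
       \<and> ((\<exists>s::nat. has_SEP C (\<lambda>k. 2 ^ (s * (k + 1)))) \<longleftrightarrow>
          (\<exists>s::nat. \<forall>G\<in>C. \<forall>d P. complete_multipartite G d P \<longrightarrow>
              part_max d P \<le> 2 ^ (s * (part_sum d P - part_max d P + 1))))"
proof -
  have finite: "\<forall>G\<in>C. finite_graph G" using assms by blast
  have "MSO2_orderable C \<longleftrightarrow> (\<exists>s. part_max_bounded C s)"
    using part_max_bounded_of_MSO2_orderable[OF finite] MSO2_orderable_of_part_max_bounded[OF assms]
    by blast
  moreover have "(\<exists>s. has_SEP C (\<lambda>k. 2 ^ (s * (k + 1)))) \<longleftrightarrow> (\<exists>s. part_max_bounded C s)"
    using part_max_bounded_of_SEP[OF finite] SEP_of_part_max_bounded[OF assms] by blast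
  ultimately show ?thesis unfolding part_max_bounded_def by blast
qed

end
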